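(* Let $n \ge 2$ and let $\Omega \subset \mathbb{R}^n$ be an unbounded domain. Let $r_* > 0$ be such that $S_r \cap \Omega \neq \emptyset$ for all $r > r_*$, where $S_r$ is the sphere of radius $r$ centered at the origin. Let $c : (0,\infty) \to (0,\infty)$ be a positive non-increasing function and let $\lambda > 3$ be such that $$\int_{r_*}^\infty r^\lambda c(r)\,dr = \infty.$$ Then every non-negative (viscosity) solution $u$ of the problem $$\Delta_\infty u \ge c(|x|)\, u^\lambda \ \text{in } \Omega, \qquad u|_{\partial\Omega} = 0$$ is identically zero.
   Context: The $\infty$-Laplacian is $\Delta_\infty u = \sum_{i,j=1}^n \frac{\partial^2 u}{\partial x_i \partial x_j}\frac{\partial u}{\partial x_i}\frac{\partial u}{\partial x_j}$. For $u:\Omega \to \mathbb{R}$ and $x \in \Omega$, the second-order superjet $J^{2,+}_\Omega u(x)$ is the set of pairs $(v,A)$ with $v \in \mathbb{R}^n$ and $A$ a symmetric $n\times n$ matrix such that $u(y) - u(x) \le \langle v, y-x\rangle + \frac12 \langle A(y-x), y-x\rangle + o(|y-x|^2)$ for all $y$ in some neighborhood of $x$. A function $u \ge 0$ on $\overline{\Omega}$ is a non-negative solution of the problem if $u$ is upper semicontinuous on $\overline{\Omega}$, $u = 0$ on $\partial\Omega$, and for every $x \in \Omega$ with $J^{2,+}_\Omega u(x) \ne \emptyset$ one has $\langle Av, v\rangle \ge c(|x|)u(x)^\lambda$ for all $(v,A) \in J^{2,+}_\Omega u(x)$. If $\Omega = \mathbb{R}^n$, the boundary condition is void. *)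

theory Defs
  imports "HOL-Analysis.Analysis"
begin

definition usc_on :: "('a::metric_space) set \<Rightarrow> ('a \<Rightarrow> real) \<Rightarrow> bool" where
  "usc_on S u \<longleftrightarrow> (\<forall>x\<in>S. \<forall>e>0. \<exists>d>0. \<forall>y\<in>S. dist y x < d \<longrightarrow> u y < u x + e)"

definition superjet2 ::
  "(real^'n) set \<Rightarrow> (real^'n \<Rightarrow> real) \<Rightarrow> real^'n \<Rightarrow> ((real^'n) \<times> (real^'n^'n)) set" where
  "superjet2 \<Omega> u x = {(v, A). transpose A = A \<and>
     (\<forall>e>0. \<exists>d>0. \<forall>y\<in>\<Omega>. norm (y - x) < d \<longrightarrow>
        u y - u x \<le> v \<bullet> (y - x) + (1/2) * ((A *v (y - x)) \<bullet> (y - x)) + e * (norm (y - x))\<^sup>2)}"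

text \<open>Non-negative (viscosity) solution of Delta_infty u \<ge> c(|x|) u^lambda in Omega, u = 0 on the boundary.\<close>
definition nonneg_solution ::
  "(real^'n) set \<Rightarrow> (real \<Rightarrow> real) \<Rightarrow> real \<Rightarrow> (real^'n \<Rightarrow> real) \<Rightarrow> bool" where
  "nonneg_solution \<Omega> c lam u \<longleftrightarrow>
     (\<forall>x\<in>closure \<Omega>. u x \<ge> 0) \<and>
     usc_on (closure \<Omega>) u \<and>
     (\<forall>x\<in>frontier \<Omega>. u x = 0) \<and>
     (\<forall>x\<in>\<Omega>. \<forall>(v, A)\<in>superjet2 \<Omega> u x. (A *v v) \<bullet> v \<ge> c (norm x) * (u x) powr lam)"

end

(* Suppose u is positive somewhere and let max_u r be the maximum of u over the closure of Omega
   intersected with the closed ball of radius r.  Testing the equation with radial functions shows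
   that u has no positive interior local maximum, so max_u r is attained on the sphere of radius r
   and is strictly increasing, and max_u lies below every radial supersolution W
   (W'' W'^2 <= c W^lam) that dominates it at both ends of an annulus.

   On the dyadic radii rho j = R 2^j let sigma j be the slopes of the chords of max_u.  Comparison
   with chords, with quadratics and with the blow-up barriers A (T - r)^(-alpha), alpha = 4/(lam - 3),
   gives two facts: sigma (j+1) >= sigma j (1 + min 1 (c(rho (j+2)) rho j^(lam+1) sigma j^(lam-3) / 9)),
   and c(kappa rho j) rho j^(lam+1) sigma j^(lam-3) stays bounded.  Together they make
   sigma j^(3-lam) drop by a fixed multiple of c(kappa rho j) rho j^(lam+1) at each step, so this
   series converges, and by dyadic comparison the integral of r^lam c(r) is finite. *)

theory Submission
  imports Defs
begin

section \<open>Upper semicontinuity and compactness\<close>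

lemma usc_on_subset: "usc_on T f \<Longrightarrow> S \<subseteq> T \<Longrightarrow> usc_on S f"
  unfolding usc_on_def by blast

lemma usc_on_add_continuous:
  fixes f g :: "'a::metric_space \<Rightarrow> real"
  assumes "usc_on S f" "continuous_on S g"
  shows "usc_on S (\<lambda>x. f x + g x)"
  unfolding usc_on_def
proof (intro ballI allI impI)
  fix x e assume x: "x \<in> S" and e: "(e::real) > 0"
  obtain d1 where d1: "d1 > 0" "\<forall>y\<in>S. dist y x < d1 \<longrightarrow> f y < f x + e/2"
    using assms(1) x e unfolding usc_on_def by (meson half_gt_zero)
  obtain d2 where d2: "d2 > 0" "\<forall>y\<in>S. dist y x < d2 \<longrightarrow> dist (g y) (g x) < e/2"
    using assms(2) x e unfolding continuous_on_iff by (meson half_gt_zero)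
  have "f y + g y < f x + g x + e" if "y \<in> S" "dist y x < min d1 d2" for y
  proof -
    have "f y < f x + e/2" "\<bar>g y - g x\<bar> < e/2"
      using that d1 d2 by (auto simp: dist_real_def)
    then show ?thesis
      unfolding abs_less_iff by linarith
  qed
  then show "\<exists>d>0. \<forall>y\<in>S. dist y x < d \<longrightarrow> f y + g y < f x + g x + e"
    using d1 d2 by (intro exI[of _ "min d1 d2"]) auto
qed

lemma usc_on_openin_sublevel:
  assumes "usc_on S f"
  shows "openin (top_of_set S) {x\<in>S. f x < t}"
  unfolding openin_euclidean_subtopology_iff
proof (intro conjI ballI)
  fix x assume x: "x \<in> {x\<in>S. f x < t}"
  then obtain d where "d > 0" "\<forall>y\<in>S. dist y x < d \<longrightarrow> f y < f x + (t - f x)"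
    using assms x unfolding usc_on_def by (metis (no_types, lifting) diff_gt_0_iff_gt mem_Collect_eq)
  then show "\<exists>d>0. \<forall>y\<in>S. dist y x < d \<longrightarrow> y \<in> {x\<in>S. f x < t}"
    by auto
qed auto

lemma usc_on_compact_attains_max:
  fixes f :: "'a::metric_space \<Rightarrow> real"
  assumes "compact S" "S \<noteq> {}" "usc_on S f"
  shows "\<exists>y\<in>S. \<forall>x\<in>S. f x \<le> f y"
proof (rule ccontr)
  let ?U = "\<lambda>y. {x\<in>S. f x < f y}"
  assume "\<not> ?thesis"
  then have "S \<subseteq> \<Union>(?U ` S)"
    by (auto simp: not_le)
  moreover have "\<forall>c\<in>?U ` S. openin (top_of_set S) c"
    using usc_on_openin_sublevel[OF assms(3)] by blast
  ultimately obtain C where C: "C \<subseteq> ?U ` S" "finite C" "S \<subseteq> \<Union>C"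
    using assms(1) unfolding compact_eq_openin_cover by meson
  then obtain D where D: "D \<subseteq> S" "finite D" "C = ?U ` D"
    using finite_subset_image by meson
  then have "D \<noteq> {}"
    using assms(2) C(3) by auto
  obtain y where y: "y \<in> D" "\<forall>x\<in>D. f x \<le> f y"
    using Max_in[of "f ` D"] Max_ge[of "f ` D"] \<open>finite D\<close> \<open>D \<noteq> {}\<close> by fastforce
  then show False
    using C(3) D by force
qed

lemma compact_annulus: "compact {x::'a::euclidean_space. a \<le> norm x \<and> norm x \<le> b}"
proof -
  have "closed {x::'a. a \<le> norm x \<and> norm x \<le> b}"
    by (intro closed_Collect_conj closed_Collect_le continuous_intros)
  moreover have "bounded {x::'a. a \<le> norm x \<and> norm x \<le> b}"
    by (rule bounded_subset[OF bounded_cball[of 0 b]]) auto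
  ultimately show ?thesis
    by (simp add: compact_eq_bounded_closed)
qed

section \<open>One-variable estimates\<close>

lemma second_order_upper_estimate:
  fixes f f1 f2 :: "real \<Rightarrow> real"
  assumes f1: "\<forall>t\<in>{a<..<b}. (f has_real_derivative f1 t) (at t)"
    and f2: "\<forall>t\<in>{a<..<b}. (f1 has_real_derivative f2 t) (at t)"
    and cont: "isCont f2 s" and s: "a < s" "s < b" and e: "e > 0"
  shows "\<exists>d>0. \<forall>x. \<bar>x - s\<bar> < d \<longrightarrow>
           f x \<le> f s + f1 s * (x - s) + (f2 s / 2) * (x - s)^2 + e * (x - s)^2"
proof -
  have "2 * e > 0"
    using e by simp
  then obtain d1 where d1: "d1 > 0" "\<forall>t. \<bar>t - s\<bar> < d1 \<longrightarrow> \<bar>f2 t - f2 s\<bar> < 2 * e"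
    using cont unfolding continuous_at_eps_delta dist_real_def by blast
  define d where "d = min d1 (min (s - a) (b - s))"
  have "f x \<le> f s + f1 s * (x - s) + (f2 s / 2) * (x - s)^2 + e * (x - s)^2"
    if x: "\<bar>x - s\<bar> < d" for x
  proof (cases "x = s")
    case False
    define diff where "diff = (\<lambda>m::nat. if m = 0 then f else if m = 1 then f1 else f2)"
    have "\<forall>m t. m < 2 \<and> min x s \<le> t \<and> t \<le> max x s \<longrightarrow> DERIV (diff m) t :> diff (Suc m) t"
    proof (intro allI impI)
      fix m t assume mt: "m < (2::nat) \<and> min x s \<le> t \<and> t \<le> max x s"
      then have "t \<in> {a<..<b}"
        using x unfolding d_def by (auto simp: abs_if split: if_splits)
      then show "DERIV (diff m) t :> diff (Suc m) t"
        using mt f1 f2 unfolding diff_def by (cases "m = 0") auto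
    qed
    then obtain t where t: "(if x < s then x < t \<and> t < s else s < t \<and> t < x)"
      and fx: "f x = (\<Sum>m<2. (diff m s / fact m) * (x - s)^m) + (diff 2 t / fact 2) * (x - s)^2"
      using Taylor[of 2 diff f "min x s" "max x s" s x] False by (auto simp: diff_def)
    have "\<bar>t - s\<bar> < d1"
      using t x unfolding d_def by (auto split: if_splits)
    then have "f2 t \<le> f2 s + 2 * e"
      using d1(2) by fastforce
    then have "(f2 t / 2) * (x - s)^2 \<le> (f2 s / 2 + e) * (x - s)^2"
      by (intro mult_right_mono) auto
    then show ?thesis
      using fx unfolding diff_def by (simp add: eval_nat_numeral algebra_simps)
  qed simp
  moreover have "d > 0"
    using d1 s unfolding d_def by simp
  ultimately show ?thesis
    by blast
qed

lemma has_real_derivative_imp_below_line: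
  fixes W :: "real \<Rightarrow> real"
  assumes "(W has_real_derivative w) (at a)" "w < \<sigma>" "a < b"
  shows "\<exists>r. a < r \<and> r \<le> b \<and> W r < W a + \<sigma> * (r - a)"
proof -
  have "((\<lambda>h. (W (a + h) - W a) / h) \<longlongrightarrow> w) (at 0)"
    using assms(1) by (simp add: DERIV_def)
  then have "eventually (\<lambda>h. (W (a + h) - W a) / h < \<sigma>) (at 0)"
    using assms(2) by (rule order_tendstoD)
  then obtain d where d: "d > 0" "\<forall>h. h \<noteq> 0 \<and> dist h 0 < d \<longrightarrow> (W (a + h) - W a) / h < \<sigma>"
    unfolding eventually_at by auto
  define h where "h = min (d/2) (b - a)"
  have "h > 0" "h < d" "h \<le> b - a"
    unfolding h_def using d assms(3) by auto
  then have "(W (a + h) - W a) / h < \<sigma>"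
    using d(2) by simp
  then have "W (a + h) - W a < \<sigma> * h"
    using \<open>h > 0\<close> by (simp add: field_simps)
  then show ?thesis
    using \<open>h > 0\<close> \<open>h \<le> b - a\<close> by (intro exI[of _ "a + h"]) auto
qed

lemma one_plus_powr_neg_le_chord:
  fixes p x :: real
  assumes p: "p > 0" and x: "0 \<le> x" "x \<le> 1"
  shows "(1 + x) powr (- p) \<le> 1 - p * 2 powr (- p - 1) * x"
proof (cases "x = 0")
  case False
  then have "0 < x" using x by simp
  have "DERIV (\<lambda>t. (1 + t) powr (- p)) t :> (- p) * (1 + t) powr (- p - 1)" if "0 \<le> t" for t
    using that DERIV_fun_powr[of "\<lambda>t. 1 + t" 1 t "- p"] by (auto intro!: derivative_eq_intros)
  then obtain z where z: "0 < z" "z < x"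
    "(1 + x) powr (- p) - (1 + 0) powr (- p) = (x - 0) * ((- p) * (1 + z) powr (- p - 1))"
    using MVT2[OF \<open>0 < x\<close>, of "\<lambda>t. (1 + t) powr (- p)"] by force
  have "2 powr (- p - 1) \<le> (1 + z) powr (- p - 1)"
    using z x p by (intro powr_mono2') auto
  then have "p * 2 powr (- p - 1) * x \<le> p * (1 + z) powr (- p - 1) * x"
    using p \<open>0 < x\<close> by (intro mult_right_mono mult_left_mono) auto
  then show ?thesis
    using z(3) by (simp add: algebra_simps)
qed simp

lemma has_real_derivative_powr_diff:
  assumes "r < T"
  shows "((\<lambda>r. (T - r) powr p) has_real_derivative - p * (T - r) powr (p - 1)) (at r)"
  using assms DERIV_fun_powr[of "\<lambda>r. T - r" "-1" r p] by (auto intro!: derivative_eq_intros)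

lemma powr_diff_mult_power:
  fixes x a :: real
  assumes "x > 0"
  shows "x powr (a - real n) * x ^ n = x powr a"
proof -
  have "x powr (a - real n) * x powr real n = x powr a"
    by (simp add: powr_add[symmetric])
  then show ?thesis
    using assms by (simp add: powr_realpow)
qed

lemma blowup_barrier_derivatives:
  fixes A T \<alpha> :: real
  assumes "r < T"
  shows "((\<lambda>r. A * (T - r) powr (- \<alpha>)) has_real_derivative \<alpha> * A * (T - r) powr (- \<alpha> - 1)) (at r)"
    and "((\<lambda>r. \<alpha> * A * (T - r) powr (- \<alpha> - 1)) has_real_derivative
          \<alpha> * (\<alpha> + 1) * A * (T - r) powr (- \<alpha> - 2)) (at r)"
  using DERIV_cmult[OF has_real_derivative_powr_diff[OF assms, of "- \<alpha>"], of A]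
    DERIV_cmult[OF has_real_derivative_powr_diff[OF assms, of "- \<alpha> - 1"], of "\<alpha> * A"]
  by (simp_all add: algebra_simps diff_diff_eq[symmetric] del: diff_diff_eq)

lemma blowup_barrier_equation:
  fixes A x \<alpha> lam :: real
  assumes "x > 0" "A > 0" "\<alpha> * (lam - 3) = 4"
  shows "(\<alpha> * (\<alpha> + 1) * A * x powr (- \<alpha> - 2)) * (\<alpha> * A * x powr (- \<alpha> - 1))^2
       = \<alpha>^3 * (\<alpha> + 1) / A powr (lam - 3) * (A * x powr (- \<alpha>)) powr lam"
proof -
  have x: "x powr (- \<alpha> - 2) * (x powr (- \<alpha> - 1))^2 = x powr (- \<alpha> * lam)"
  proof -
    have "x powr (- \<alpha> - 2) * (x powr (- \<alpha> - 1))^2 = x powr (- \<alpha> - 2 + 2 * (- \<alpha> - 1))"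
      by (simp add: power2_eq_square powr_add[symmetric])
    also have "- \<alpha> - 2 + 2 * (- \<alpha> - 1) = - \<alpha> * lam"
      using assms(3) by (simp add: algebra_simps)
    finally show ?thesis .
  qed
  have "(\<alpha> * (\<alpha> + 1) * A * x powr (- \<alpha> - 2)) * (\<alpha> * A * x powr (- \<alpha> - 1))^2
      = \<alpha>^3 * (\<alpha> + 1) * A^3 * (x powr (- \<alpha> - 2) * (x powr (- \<alpha> - 1))^2)"
    by (simp add: power2_eq_square power3_eq_cube)
  also have "\<dots> = \<alpha>^3 * (\<alpha> + 1) * (A powr lam / A powr (lam - 3)) * x powr (- \<alpha> * lam)"
  proof -
    have "A^3 = A powr lam / A powr (lam - 3)"
      using powr_diff_mult_power[OF assms(2), of lam 3] assms(2) by (simp add: field_simps)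
    then show ?thesis
      unfolding x by simp
  qed
  also have "\<dots> = \<alpha>^3 * (\<alpha> + 1) / A powr (lam - 3) * (A * x powr (- \<alpha>)) powr lam"
    using assms(1,2) by (simp add: powr_mult powr_powr)
  finally show ?thesis .
qed

lemma blowup_coefficient:
  fixes \<alpha> lam a s r :: real
  assumes "\<alpha> > 0" "\<alpha> * (lam - 3) = 4" "lam > 3" "s > 0" "r > 0" "s * r \<le> a"
  shows "16 * \<alpha>^4 * r powr (lam + 1) * s powr (lam - 3) \<le> (a * (2 * \<alpha> * a / s) powr \<alpha>) powr (lam - 3)"
proof -
  have "a > 0"
    using mult_pos_pos[OF assms(4,5)] assms(6) by linarith
  have "16 * \<alpha>^4 * r powr (lam + 1) * s powr (lam - 3) = 16 * \<alpha>^4 * (s * r) powr (lam + 1) / s^4"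
    using powr_diff_mult_power[OF assms(4), of "lam + 1" 4] assms(4,5) by (simp add: powr_mult field_simps)
  also have "\<dots> \<le> 16 * \<alpha>^4 * a powr (lam + 1) / s^4"
    using assms by (intro divide_right_mono mult_left_mono powr_mono2) auto
  also have "\<dots> = 16 * \<alpha>^4 * (a powr (lam - 3) * a^4) / s^4"
    using powr_diff_mult_power[OF \<open>a > 0\<close>, of "lam + 1" 4] by simp
  also have "\<dots> = a powr (lam - 3) * (2 * \<alpha> * a / s)^4"
    by (simp add: power_divide power_mult_distrib)
  also have "\<dots> = (a * (2 * \<alpha> * a / s) powr \<alpha>) powr (lam - 3)"
    using assms(1,2,4) \<open>a > 0\<close> by (simp add: powr_mult powr_powr powr_realpow)
  finally show ?thesis .
qed

lemma exists_powr_neg_above: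
  fixes \<alpha> A M D :: real
  assumes "\<alpha> > 0" "A > 0" "M > 0" "D > 0"
  shows "\<exists>\<eta>. 0 < \<eta> \<and> \<eta> < D \<and> M \<le> A * \<eta> powr (- \<alpha>)"
proof -
  define \<eta> where "\<eta> = min (D/2) ((A / M) powr (1/\<alpha>))"
  have "\<eta> > 0" "\<eta> < D"
    unfolding \<eta>_def using assms by auto
  have "((A / M) powr (1/\<alpha>)) powr (- \<alpha>) \<le> \<eta> powr (- \<alpha>)"
    unfolding \<eta>_def using assms \<open>\<eta> > 0\<close>[unfolded \<eta>_def] by (intro powr_mono2') auto
  moreover have "((A / M) powr (1/\<alpha>)) powr (- \<alpha>) = M / A"
    using assms by (simp add: powr_powr powr_minus_divide)
  ultimately have "M \<le> A * \<eta> powr (- \<alpha>)"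
    using assms(2) by (simp add: field_simps)
  then show ?thesis
    using \<open>\<eta> > 0\<close> \<open>\<eta> < D\<close> by blast
qed

lemma powr_neg_decrement:
  fixes s s' g p C :: real
  assumes "p > 0" "s > 0" "0 \<le> g" "g * s powr p < C"
    and growth: "s * (1 + min 1 (g * s powr p / 9)) \<le> s'"
  shows "p * 2 powr (- p - 1) * g / (9 + C) \<le> s powr (- p) - s' powr (- p)"
proof -
  define y where "y = g * s powr p"
  define x where "x = min 1 (y / 9)"
  have "0 \<le> y" "0 \<le> x" "x \<le> 1"
    unfolding x_def y_def using assms(3) by auto
  have "s' powr (- p) \<le> (s * (1 + x)) powr (- p)"
    using growth assms(1,2) \<open>0 \<le> x\<close> unfolding x_def y_def by (intro powr_mono2') auto
  also have "\<dots> = s powr (- p) * (1 + x) powr (- p)"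
    using assms(2) \<open>0 \<le> x\<close> by (simp add: powr_mult)
  also have "\<dots> \<le> s powr (- p) * (1 - p * 2 powr (- p - 1) * x)"
    using one_plus_powr_neg_le_chord[OF assms(1) \<open>0 \<le> x\<close> \<open>x \<le> 1\<close>] by (intro mult_left_mono) auto
  finally have "p * 2 powr (- p - 1) * (s powr (- p) * x) \<le> s powr (- p) - s' powr (- p)"
    by (simp add: algebra_simps)
  moreover have "y / (9 + C) \<le> x"
  proof -
    have "y < C"
      using assms(4) unfolding y_def .
    then have "y / (9 + C) \<le> y / 9"
      using \<open>0 \<le> y\<close> by (intro divide_left_mono) auto
    moreover have "y / (9 + C) \<le> 1"
      using \<open>y < C\<close> \<open>0 \<le> y\<close> by (simp add: divide_le_eq)
    ultimately show ?thesis
      unfolding x_def by simp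
  qed
  then have "p * 2 powr (- p - 1) * (s powr (- p) * (y / (9 + C))) \<le> p * 2 powr (- p - 1) * (s powr (- p) * x)"
    using assms(1) by (intro mult_left_mono) auto
  moreover have "s powr (- p) * y = g"
    unfolding y_def using assms(2) by (simp add: powr_minus field_simps)
  ultimately show ?thesis
    by (simp add: mult.assoc)
qed

section \<open>Dyadic comparison of the integral\<close>

lemma exists_dyadic_interval:
  fixes t :: real
  assumes "t \<ge> 1"
  shows "\<exists>j::nat. 2^j \<le> t \<and> t < 2^(Suc j)"
proof -
  obtain n :: nat where "t < 2^n"
    using real_arch_pow[of 2 t] by auto
  define k where "k = (LEAST n::nat. t < 2^n)"
  have "t < 2^k"
    unfolding k_def using \<open>t < 2^n\<close> by (rule LeastI)
  moreover have "k \<noteq> 0"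
    using \<open>t < 2^k\<close> assms by (intro notI) simp
  then obtain j where "k = Suc j"
    using not0_implies_Suc by blast
  moreover have "\<not> t < 2^j"
    using not_less_Least[of j "\<lambda>n. t < (2::real)^n"] \<open>k = Suc j\<close> unfolding k_def by simp
  ultimately show ?thesis
    by (intro exI[of _ j]) auto
qed

lemma dyadic_majorant:
  fixes c :: "real \<Rightarrow> real" and lam r0 \<tau> :: real
  assumes r0: "0 < r0" "r0 \<le> \<tau>" and "\<forall>r>0. c r > 0"
    and "\<forall>r s. 0 < r \<and> r \<le> s \<longrightarrow> c s \<le> c r" and "lam \<ge> 0"
  shows "ennreal (r powr lam * c r) * indicator {r0..} r
    \<le> ennreal (\<tau> powr lam * c r0) * indicator {r0..\<tau>} r
      + (\<Sum>j. ennreal ((\<tau> * 2^Suc j) powr lam * c (\<tau> * 2^j)) * indicator {\<tau> * 2^j..<\<tau> * 2^Suc j} r)"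
    (is "_ \<le> ?first + ?dyadic")
proof (cases "r0 \<le> r")
  case True
  then have "r > 0"
    using r0 by simp
  show ?thesis
  proof (cases "r \<le> \<tau>")
    case True
    have "r powr lam * c r \<le> \<tau> powr lam * c r0"
      using \<open>r0 \<le> r\<close> True \<open>r > 0\<close> assms by (intro mult_mono powr_mono2) (auto simp: less_imp_le)
    then have "ennreal (r powr lam * c r) * indicator {r0..} r \<le> ?first"
      using \<open>r0 \<le> r\<close> True by (simp add: indicator_def ennreal_leI)
    then show ?thesis
      by (simp add: add_increasing2)
  next
    case False
    then obtain j where "2^j \<le> r / \<tau>" "r / \<tau> < 2^(Suc j)"
      using exists_dyadic_interval[of "r / \<tau>"] r0 by auto
    then have j: "\<tau> * 2^j \<le> r" "r < \<tau> * 2^Suc j"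
      using r0 by (auto simp: field_simps)
    have "r powr lam * c r \<le> (\<tau> * 2^Suc j) powr lam * c (\<tau> * 2^j)"
      using j \<open>r > 0\<close> assms by (intro mult_mono powr_mono2) (auto simp: less_imp_le)
    then have "ennreal (r powr lam * c r) * indicator {r0..} r
        \<le> ennreal ((\<tau> * 2^Suc j) powr lam * c (\<tau> * 2^j)) * indicator {\<tau> * 2^j..<\<tau> * 2^Suc j} r"
      using \<open>r0 \<le> r\<close> j by (simp add: indicator_def ennreal_leI)
    also have "\<dots> \<le> ?dyadic"
    proof -
      define F where "F j = ennreal ((\<tau> * 2^Suc j) powr lam * c (\<tau> * 2^j)) * indicator {\<tau> * 2^j..<\<tau> * 2^Suc j} r"
        for j
      have "sum F {j} \<le> suminf F"
        by (rule sum_le_suminf) auto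
      then show ?thesis
        unfolding F_def[symmetric] by simp
    qed
    finally show ?thesis
      by (simp add: add_increasing)
  qed
qed (simp add: indicator_def)

lemma nn_integral_finite_if_dyadic_summable:
  fixes c :: "real \<Rightarrow> real" and lam r0 \<tau> :: real
  assumes r0: "0 < r0" "r0 \<le> \<tau>" and c_pos: "\<forall>r>0. c r > 0"
    and "\<forall>r s. 0 < r \<and> r \<le> s \<longrightarrow> c s \<le> c r" and "lam \<ge> 0"
    and summable: "summable (\<lambda>j. c (\<tau> * 2^j) * (\<tau> * 2^j) powr (lam + 1))"
  shows "(\<integral>\<^sup>+ r\<in>{r0..}. ennreal (r powr lam * c r) \<partial>lborel) \<noteq> \<infinity>"
proof -
  define b where "b j = (\<tau> * 2^Suc j) powr lam * c (\<tau> * 2^j)" for j :: nat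
  have "b j \<ge> 0" for j
    unfolding b_def using c_pos r0 by (simp add: less_imp_le)
  have length: "emeasure lborel {\<tau> * 2^j..<\<tau> * 2^Suc j} = ennreal (\<tau> * 2^j)" for j :: nat
    using r0 by simp
  have b_length: "b j * (\<tau> * 2^j) = 2 powr lam * (c (\<tau> * 2^j) * (\<tau> * 2^j) powr (lam + 1))" for j :: nat
  proof -
    have "(\<tau> * 2^Suc j) powr lam = 2 powr lam * (\<tau> * 2^j) powr lam"
      using r0 by (simp add: powr_mult)
    moreover have "(\<tau> * 2^j) powr (lam + 1) = (\<tau> * 2^j) powr lam * (\<tau> * 2^j)"
      using r0 by (simp add: powr_add)
    ultimately show ?thesis
      unfolding b_def by (simp add: algebra_simps)
  qed
  have "(\<integral>\<^sup>+ r\<in>{r0..}. ennreal (r powr lam * c r) \<partial>lborel)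
      \<le> (\<integral>\<^sup>+ r. ennreal (\<tau> powr lam * c r0) * indicator {r0..\<tau>} r
           + (\<Sum>j. ennreal (b j) * indicator {\<tau> * 2^j..<\<tau> * 2^Suc j} r) \<partial>lborel)"
    unfolding b_def using dyadic_majorant[OF assms(1-5)] by (intro nn_integral_mono) auto
  also have "\<dots> = ennreal (\<tau> powr lam * c r0) * emeasure lborel {r0..\<tau>}
      + (\<Sum>j. ennreal (b j) * emeasure lborel {\<tau> * 2^j..<\<tau> * 2^Suc j})"
    by (subst nn_integral_add) (auto simp: nn_integral_suminf nn_integral_cmult_indicator)
  also have "\<dots> = ennreal (\<tau> powr lam * c r0 * (\<tau> - r0))
      + ennreal (\<Sum>j. 2 powr lam * (c (\<tau> * 2^j) * (\<tau> * 2^j) powr (lam + 1)))"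
  proof -
    have "ennreal (b j) * emeasure lborel {\<tau> * 2^j..<\<tau> * 2^Suc j}
        = ennreal (2 powr lam * (c (\<tau> * 2^j) * (\<tau> * 2^j) powr (lam + 1)))" for j
      unfolding length b_length[symmetric] using \<open>b j \<ge> 0\<close> r0 by (simp add: ennreal_mult)
    moreover have "(\<Sum>j. ennreal (2 powr lam * (c (\<tau> * 2^j) * (\<tau> * 2^j) powr (lam + 1))))
        = ennreal (\<Sum>j. 2 powr lam * (c (\<tau> * 2^j) * (\<tau> * 2^j) powr (lam + 1)))"
      using summable c_pos r0 by (intro suminf_ennreal2 summable_mult) (auto simp: less_imp_le)
    moreover have "0 \<le> \<tau> powr lam * c r0"
      using c_pos r0 by (simp add: less_imp_le)
    ultimately show ?thesis
      using r0 by (simp add: ennreal_mult)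
  qed
  finally show ?thesis
    by (auto simp: top_unique)
qed

section \<open>Superjets of radial functions\<close>

text \<open>\<open>radial_matrix a b z\<close> is \<open>a I + b z z\<^sup>T\<close>, the shape of the Hessian of \<open>\<lambda>x. W (norm x)\<close> at \<open>z\<close>.\<close>

definition radial_matrix :: "real \<Rightarrow> real \<Rightarrow> real^'n \<Rightarrow> real^'n^'n" where
  "radial_matrix a b z = (\<chi> i j. (if i = j then a else 0) + b * (z$i * z$j))"

lemma radial_matrix_mult: "radial_matrix a b z *v h = a *\<^sub>R h + (b * (z \<bullet> h)) *\<^sub>R z"
proof -
  have "(\<Sum>j\<in>UNIV. ((if i = j then a else 0) + b * (z$i * z$j)) * h$j) = a * h$i + b * (z \<bullet> h) * z$i"
    for i
  proof -
    have "(\<Sum>j\<in>UNIV. (if i = j then a else 0) * h$j) = (\<Sum>j\<in>UNIV. if i = j then a * h$j else 0)"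
      by (rule sum.cong) auto
    then have "(\<Sum>j\<in>UNIV. (if i = j then a else 0) * h$j) = a * h$i"
      by simp
    then have "(\<Sum>j\<in>UNIV. ((if i = j then a else 0) + b * (z$i * z$j)) * h$j)
        = a * h$i + b * z$i * (\<Sum>j\<in>UNIV. z$j * h$j)"
      by (simp add: sum.distrib distrib_right sum_distrib_left mult.assoc)
    then show ?thesis
      by (simp add: inner_vec_def)
  qed
  then show ?thesis
    by (simp add: radial_matrix_def matrix_vector_mult_def vec_eq_iff)
qed

lemma transpose_radial_matrix: "transpose (radial_matrix a b z) = radial_matrix a b z"
  by (simp add: radial_matrix_def transpose_def vec_eq_iff mult.commute eq_commute)

lemma radial_matrix_quadratic_form:
  "(radial_matrix a b z *v h) \<bullet> h = a * (norm h)^2 + b * (z \<bullet> h)^2"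
  by (simp add: radial_matrix_mult inner_add_left dot_square_norm power2_eq_square)

lemma superjet2_touching_above:
  assumes "(v, A) \<in> superjet2 UNIV F z" "d > 0"
    and "\<forall>y\<in>\<Omega>. norm (y - z) < d \<longrightarrow> u y - u z \<le> F y - F z"
  shows "(v, A) \<in> superjet2 \<Omega> u z"
proof -
  have "\<exists>d'>0. \<forall>y\<in>\<Omega>. norm (y - z) < d' \<longrightarrow>
      u y - u z \<le> v \<bullet> (y - z) + (1/2) * ((A *v (y - z)) \<bullet> (y - z)) + e * (norm (y - z))\<^sup>2"
    if "e > 0" for e
  proof -
    obtain d' where "d' > 0" "\<forall>y. norm (y - z) < d' \<longrightarrow>
        F y - F z \<le> v \<bullet> (y - z) + (1/2) * ((A *v (y - z)) \<bullet> (y - z)) + e * (norm (y - z))\<^sup>2"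
      using assms(1) \<open>e > 0\<close> unfolding superjet2_def by blast
    then show ?thesis
      using assms(2,3) by (intro exI[of _ "min d d'"]) force
  qed
  then show ?thesis
    using assms(1) unfolding superjet2_def by blast
qed

lemma norm_add_power2: "(norm (z + h))^2 = (norm z)^2 + 2 * (z \<bullet> h) + (norm h)^2"
  for z h :: "'a::real_inner"
  by (simp add: dot_square_norm[symmetric] inner_add_left inner_add_right inner_commute)

lemma increment_bounds:
  fixes p q n r :: real
  assumes "\<bar>p\<bar> \<le> r * n" "0 \<le> q" "q \<le> n"
  shows "\<bar>2*p + q\<bar> \<le> (2*r + 1) * n" and "\<bar>4*p*q + q^2\<bar> \<le> (4*r + 1) * n * q"
proof -
  show "\<bar>2*p + q\<bar> \<le> (2*r + 1) * n"
    using assms by (simp add: algebra_simps abs_le_iff)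
  have "\<bar>4*p*q + q^2\<bar> \<le> \<bar>4*p*q\<bar> + \<bar>q^2\<bar>"
    by (rule abs_triangle_ineq)
  also have "\<dots> = 4 * \<bar>p\<bar> * q + q * q"
    using assms(2) by (simp add: abs_mult power2_eq_square)
  also have "\<dots> \<le> 4 * (r * n) * q + n * q"
    using assms by (intro add_mono mult_right_mono) auto
  finally show "\<bar>4*p*q + q^2\<bar> \<le> (4*r + 1) * n * q"
    by (simp add: algebra_simps)
qed

lemma second_order_remainder_absorbed:
  fixes p n r e e' g1 g2 :: real
  assumes p: "\<bar>p\<bar> \<le> r * n" and n: "0 \<le> n" "n \<le> 1"
    and e': "0 \<le> e'" "e' * (2*r + 1)^2 \<le> e / 2" and g2: "\<bar>g2\<bar> * (4*r + 1) * n \<le> e"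
  shows "g1 * (2*p + n^2) + (g2 / 2) * (2*p + n^2)^2 + e' * (2*p + n^2)^2
    \<le> 2 * g1 * p + (g1 * n^2 + 2 * g2 * p^2) + e * n^2"
proof -
  define q where "q = n^2"
  have q: "0 \<le> q" "q \<le> n"
    unfolding q_def using n by (auto simp: power2_eq_square mult_left_le_one_le)
  note bounds = increment_bounds[OF p q]
  have "(2*p + q)^2 \<le> ((2*r + 1) * n)^2"
    using bounds(1) by (metis abs_ge_zero power2_abs power_mono)
  then have "e' * (2*p + q)^2 \<le> e' * ((2*r + 1)^2 * q)"
    using e'(1) unfolding q_def by (intro mult_left_mono) (auto simp: power_mult_distrib)
  also have "\<dots> \<le> e * q / 2"
    using mult_right_mono[OF e'(2) q(1)] by (simp add: mult.assoc)
  finally have error1: "e' * (2*p + q)^2 \<le> e * q / 2" .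
  have "(g2 / 2) * (4*p*q + q^2) \<le> \<bar>(g2 / 2) * (4*p*q + q^2)\<bar>"
    by (rule abs_ge_self)
  also have "\<dots> = (\<bar>g2\<bar> / 2) * \<bar>4*p*q + q^2\<bar>"
    by (simp add: abs_mult)
  also have "\<dots> \<le> (\<bar>g2\<bar> / 2) * ((4*r + 1) * n * q)"
    using bounds(2) by (intro mult_left_mono) auto
  also have "\<dots> \<le> e * q / 2"
    using g2 q(1) mult_right_mono[OF g2 q(1)] by (simp add: algebra_simps)
  finally have error2: "(g2 / 2) * (4*p*q + q^2) \<le> e * q / 2" .
  have "(g2 / 2) * (2*p + q)^2 = 2 * g2 * p^2 + (g2 / 2) * (4*p*q + q^2)"
    "g1 * (2*p + q) = 2 * g1 * p + g1 * q"
    by (simp_all add: algebra_simps power2_eq_square)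
  then show ?thesis
    using error1 error2 unfolding q_def[symmetric] by linarith
qed

text \<open>Chain rule through \<open>x \<mapsto> (norm x)^2\<close>: its increment at \<open>z\<close> is \<open>2 * (z \<bullet> h) + (norm h)^2\<close>, and the
  terms of order \<open>(norm h)^3\<close> in the square of the increment are absorbed into \<open>e * (norm h)^2\<close>.\<close>

lemma superjet2_comp_norm_power2:
  fixes G :: "real \<Rightarrow> real" and z :: "real^'n"
  assumes G: "\<forall>e>0. \<exists>d>0. \<forall>s. \<bar>s - (norm z)^2\<bar> < d \<longrightarrow> G s \<le> G ((norm z)^2)
      + g1 * (s - (norm z)^2) + (g2 / 2) * (s - (norm z)^2)^2 + e * (s - (norm z)^2)^2"
  shows "((2 * g1) *\<^sub>R z, radial_matrix (2 * g1) (4 * g2) z) \<in> superjet2 UNIV (\<lambda>x. G ((norm x)^2)) z"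
  unfolding superjet2_def
proof (clarify, intro conjI allI impI transpose_radial_matrix)
  fix e :: real assume "e > 0"
  define r where "r = norm z"
  define e' where "e' = e / (2 * (2*r + 1)^2)"
  have "r \<ge> 0"
    unfolding r_def by simp
  then have "e' > 0" "e' * (2*r + 1)^2 \<le> e / 2"
    unfolding e'_def using \<open>e > 0\<close> by (auto intro!: divide_pos_pos mult_pos_pos zero_less_power)
  then obtain dT where "dT > 0" and dT: "\<forall>s. \<bar>s - r^2\<bar> < dT \<longrightarrow>
      G s \<le> G (r^2) + g1 * (s - r^2) + (g2 / 2) * (s - r^2)^2 + e' * (s - r^2)^2"
    using G unfolding r_def by blast
  define d where "d = min 1 (min (dT / (2*r + 1)) (e / (\<bar>g2\<bar> * (4*r + 1) + 1)))"
  have "d > 0"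
    unfolding d_def using \<open>dT > 0\<close> \<open>e > 0\<close> \<open>r \<ge> 0\<close> by (simp add: add_nonneg_pos)
  have "G ((norm y)^2) - G ((norm z)^2) \<le> (2 * g1) *\<^sub>R z \<bullet> (y - z)
      + 1/2 * ((radial_matrix (2 * g1) (4 * g2) z *v (y - z)) \<bullet> (y - z)) + e * (norm (y - z))^2"
    if "norm (y - z) < d" for y
  proof -
    define n where "n = norm (y - z)"
    define p where "p = z \<bullet> (y - z)"
    have "n < dT / (2*r + 1)" "n < e / (\<bar>g2\<bar> * (4*r + 1) + 1)"
      using that unfolding n_def d_def by auto
    moreover have "2*r + 1 > 0" "\<bar>g2\<bar> * (4*r + 1) + 1 > 0"
      using \<open>r \<ge> 0\<close> by (auto simp: add_nonneg_pos)
    ultimately have n: "0 \<le> n" "n \<le> 1" "(2*r + 1) * n < dT" "(\<bar>g2\<bar> * (4*r + 1) + 1) * n < e"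
      using that unfolding n_def d_def by (auto simp: pos_less_divide_eq mult.commute)
    have p: "\<bar>p\<bar> \<le> r * n"
      unfolding p_def r_def n_def by (rule Cauchy_Schwarz_ineq2)
    have increment: "(norm y)^2 - r^2 = 2*p + n^2"
      using norm_add_power2[of z "y - z"] unfolding r_def p_def n_def by simp
    have "n^2 \<le> n"
      using n by (simp add: power2_eq_square mult_left_le_one_le)
    then have "\<bar>(norm y)^2 - r^2\<bar> < dT"
      using increment increment_bounds(1)[OF p zero_le_power2] n(3) by fastforce
    then have "G ((norm y)^2) - G (r^2) \<le> g1 * (2*p + n^2) + (g2 / 2) * (2*p + n^2)^2 + e' * (2*p + n^2)^2"
      using dT increment by fastforce
    also have "\<dots> \<le> 2 * g1 * p + (g1 * n^2 + 2 * g2 * p^2) + e * n^2"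
      using n \<open>e' > 0\<close> \<open>e' * (2*r + 1)^2 \<le> e / 2\<close>
      by (intro second_order_remainder_absorbed[OF p]) (auto simp: algebra_simps)
    also have "\<dots> = (2 * g1) *\<^sub>R z \<bullet> (y - z)
        + 1/2 * ((radial_matrix (2 * g1) (4 * g2) z *v (y - z)) \<bullet> (y - z)) + e * (norm (y - z))^2"
      unfolding radial_matrix_quadratic_form p_def n_def by simp
    finally show ?thesis
      unfolding r_def .
  qed
  then show "\<exists>d>0. \<forall>y\<in>UNIV. norm (y - z) < d \<longrightarrow> G ((norm y)^2) - G ((norm z)^2)
      \<le> (2 * g1) *\<^sub>R z \<bullet> (y - z) + 1/2 * ((radial_matrix (2 * g1) (4 * g2) z *v (y - z)) \<bullet> (y - z))
        + e * (norm (y - z))^2"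
    using \<open>d > 0\<close> by blast
qed

lemma comp_sqrt_derivatives:
  fixes W W1 W2 :: "real \<Rightarrow> real"
  assumes "0 < a" "a < b"
    and W1: "\<forall>t\<in>{a<..<b}. (W has_real_derivative W1 t) (at t)"
    and W2: "\<forall>t\<in>{a<..<b}. (W1 has_real_derivative W2 t) (at t)"
    and s: "a^2 < s" "s < b^2"
  shows "((\<lambda>s. W (sqrt s)) has_real_derivative W1 (sqrt s) / (2 * sqrt s)) (at s)"
    and "((\<lambda>s. W1 (sqrt s) / (2 * sqrt s)) has_real_derivative
          W2 (sqrt s) / (4 * (sqrt s)^2) - W1 (sqrt s) / (4 * (sqrt s)^3)) (at s)"
proof -
  have "sqrt s \<in> {a<..<b}"
    using s assms(1,2) real_less_rsqrt[of a s] real_sqrt_less_mono[of s "b^2"] by auto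
  then have "sqrt s > 0"
    using assms(1) by (meson greaterThanLessThan_iff less_trans)
  have "((\<lambda>s. W (sqrt s)) has_real_derivative W1 (sqrt s) * (inverse (sqrt s) / 2)) (at s)"
    using W1 \<open>sqrt s \<in> {a<..<b}\<close> \<open>sqrt s > 0\<close> by (intro DERIV_chain2[of W] DERIV_real_sqrt) auto
  then show "((\<lambda>s. W (sqrt s)) has_real_derivative W1 (sqrt s) / (2 * sqrt s)) (at s)"
    by (rule DERIV_cong) (simp add: field_simps)
  have "((\<lambda>s. W1 (sqrt s)) has_real_derivative W2 (sqrt s) * (inverse (sqrt s) / 2)) (at s)"
    using W2 \<open>sqrt s \<in> {a<..<b}\<close> \<open>sqrt s > 0\<close> by (intro DERIV_chain2[of W1] DERIV_real_sqrt) auto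
  moreover have "((\<lambda>s. 2 * sqrt s) has_real_derivative inverse (sqrt s)) (at s)"
    using \<open>sqrt s > 0\<close> DERIV_cmult[OF DERIV_real_sqrt, of s 2] by simp
  ultimately have "((\<lambda>s. W1 (sqrt s) / (2 * sqrt s)) has_real_derivative
      (W2 (sqrt s) * (inverse (sqrt s) / 2) * (2 * sqrt s) - W1 (sqrt s) * inverse (sqrt s))
        / (2 * sqrt s * (2 * sqrt s))) (at s)"
    using \<open>sqrt s > 0\<close> by (intro DERIV_divide) auto
  then show "((\<lambda>s. W1 (sqrt s) / (2 * sqrt s)) has_real_derivative
      W2 (sqrt s) / (4 * (sqrt s)^2) - W1 (sqrt s) / (4 * (sqrt s)^3)) (at s)"
    by (rule DERIV_cong) (use \<open>sqrt s > 0\<close> in \<open>simp add: field_simps power2_eq_square power3_eq_cube\<close>)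
qed

text \<open>\<open>W (norm x) = G ((norm x)^2)\<close> with \<open>G = W \<circ> sqrt\<close>, which is twice differentiable near \<open>(norm z)^2 > 0\<close>.\<close>

lemma superjet2_radial:
  fixes W W1 W2 :: "real \<Rightarrow> real" and z :: "real^'n"
  assumes ab: "0 < a" "a < norm z" "norm z < b"
    and W1: "\<forall>t\<in>{a<..<b}. (W has_real_derivative W1 t) (at t)"
    and W2: "\<forall>t\<in>{a<..<b}. (W1 has_real_derivative W2 t) (at t)"
    and cont: "continuous_on {a<..<b} W2"
  shows "((W1 (norm z) / norm z) *\<^sub>R z,
          radial_matrix (W1 (norm z) / norm z) ((W2 (norm z) - W1 (norm z) / norm z) / (norm z)^2) z)
         \<in> superjet2 UNIV (\<lambda>x. W (norm x)) z"
proof -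
  define r where "r = norm z"
  have "r > 0"
    using ab unfolding r_def by linarith
  define G1 where "G1 = (\<lambda>s. W1 (sqrt s) / (2 * sqrt s))"
  define G2 where "G2 = (\<lambda>s. W2 (sqrt s) / (4 * (sqrt s)^2) - W1 (sqrt s) / (4 * (sqrt s)^3))"
  have sqrt_r: "sqrt (r^2) = r"
    using \<open>r > 0\<close> by simp
  have "isCont G2 (r^2)"
  proof -
    have "isCont W2 r" "isCont W1 r"
      using cont W2 ab unfolding r_def by (auto simp: continuous_on_eq_continuous_at intro: DERIV_isCont)
    then have "isCont (\<lambda>s. W2 (sqrt s)) (r^2)" "isCont (\<lambda>s. W1 (sqrt s)) (r^2)"
      using isCont_o2[OF isCont_real_sqrt, of "r^2"] sqrt_r by simp_all
    then show ?thesis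
      unfolding G2_def using \<open>r > 0\<close> by (intro continuous_intros) (auto simp: sqrt_r)
  qed
  moreover have "a^2 < r^2" "r^2 < b^2"
    using ab \<open>r > 0\<close> unfolding r_def by (auto intro!: power_strict_mono)
  moreover have "a < b"
    using ab by linarith
  then have "\<forall>s\<in>{a^2<..<b^2}. ((\<lambda>s. W (sqrt s)) has_real_derivative G1 s) (at s)"
    "\<forall>s\<in>{a^2<..<b^2}. (G1 has_real_derivative G2 s) (at s)"
    using comp_sqrt_derivatives[OF ab(1) _ W1 W2] unfolding G1_def G2_def by auto
  ultimately have "\<forall>e>0. \<exists>d>0. \<forall>s. \<bar>s - r^2\<bar> < d \<longrightarrow> W (sqrt s) \<le> W (sqrt (r^2))
      + G1 (r^2) * (s - r^2) + (G2 (r^2) / 2) * (s - r^2)^2 + e * (s - r^2)^2"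
    using second_order_upper_estimate by blast
  then have "((2 * G1 (r^2)) *\<^sub>R z, radial_matrix (2 * G1 (r^2)) (4 * G2 (r^2)) z)
      \<in> superjet2 UNIV (\<lambda>x. W (sqrt ((norm x)^2))) z"
    unfolding r_def by (rule superjet2_comp_norm_power2[where G = "\<lambda>s. W (sqrt s)"])
  moreover have "2 * G1 (r^2) = W1 r / r" "4 * G2 (r^2) = (W2 r - W1 r / r) / r^2"
    unfolding G1_def G2_def sqrt_r using \<open>r > 0\<close>
    by (simp_all add: field_simps power2_eq_square power3_eq_cube)
  ultimately show ?thesis
    unfolding r_def by simp
qed

lemma superjet2_quadratic:
  assumes "transpose A = A"
  shows "(v, A) \<in> superjet2 UNIV (\<lambda>y. v \<bullet> (y - z) + 1/2 * ((A *v (y - z)) \<bullet> (y - z))) z"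
  using assms unfolding superjet2_def by (auto intro: exI[of _ 1])

section \<open>The maximum principle for solutions\<close>

locale nonneg_inf_solution =
  fixes \<Omega> :: "(real^'n) set" and c :: "real \<Rightarrow> real" and lam :: real and u :: "real^'n \<Rightarrow> real"
  assumes open_domain: "open \<Omega>" and solution: "nonneg_solution \<Omega> c lam u"
    and c_pos: "\<forall>r>0. c r > 0" and c_antimono: "\<forall>r s. 0 < r \<and> r \<le> s \<longrightarrow> c s \<le> c r"
    and lam_gt_3: "lam > 3"
begin

lemma usc_u: "usc_on (closure \<Omega>) u"
  using solution unfolding nonneg_solution_def by blast

lemma in_domain_if_pos: "x \<in> closure \<Omega> \<Longrightarrow> u x > 0 \<Longrightarrow> x \<in> \<Omega>"
  using solution open_domain unfolding nonneg_solution_def frontier_def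
  by (metis DiffI interior_open less_irrefl)

lemma superjet2_bound: "x \<in> \<Omega> \<Longrightarrow> (v, A) \<in> superjet2 \<Omega> u x \<Longrightarrow> c (norm x) * u x powr lam \<le> (A *v v) \<bullet> v"
  using solution unfolding nonneg_solution_def by fast

lemma c_le: "0 < r \<Longrightarrow> r \<le> s \<Longrightarrow> c s \<le> c r"
  using c_antimono by blast

lemma radial_touching_above:
  fixes W W1 W2 :: "real \<Rightarrow> real"
  assumes "z \<in> \<Omega>" and ab: "0 < a" "a < norm z" "norm z < b"
    and W1: "\<forall>t\<in>{a<..<b}. (W has_real_derivative W1 t) (at t)"
    and W2: "\<forall>t\<in>{a<..<b}. (W1 has_real_derivative W2 t) (at t)"
    and cont: "continuous_on {a<..<b} W2"
    and touch: "d > 0" "\<forall>x\<in>\<Omega>. norm (x - z) < d \<longrightarrow> u x - u z \<le> W (norm x) - W (norm z)"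
  shows "c (norm z) * u z powr lam \<le> W2 (norm z) * (W1 (norm z))^2"
proof -
  define r where "r = norm z"
  define v where "v = (W1 r / r) *\<^sub>R z"
  define A where "A = radial_matrix (W1 r / r) ((W2 r - W1 r / r) / r^2) z"
  have "(v, A) \<in> superjet2 \<Omega> u z"
    unfolding v_def A_def r_def
    by (rule superjet2_touching_above[OF superjet2_radial[OF ab W1 W2 cont] touch])
  then have "c r * u z powr lam \<le> (A *v v) \<bullet> v"
    unfolding r_def using superjet2_bound \<open>z \<in> \<Omega>\<close> by blast
  also have "(A *v v) \<bullet> v = W2 r * (W1 r)^2"
  proof -
    have "r > 0"
      using ab unfolding r_def by linarith
    have "norm v = \<bar>W1 r / r\<bar> * r"
      unfolding v_def r_def by simp
    then have norm_v: "(norm v)^2 = (W1 r / r)^2 * r^2"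
      by (metis power2_abs power_mult_distrib)
    have z_v: "z \<bullet> v = (W1 r / r) * r^2"
      unfolding v_def r_def by (simp add: dot_square_norm)
    have "(A *v v) \<bullet> v = (W1 r / r) * (W1 r / r)^2 * r^2 + ((W2 r - W1 r / r) / r^2) * ((W1 r / r) * r^2)^2"
      unfolding A_def radial_matrix_quadratic_form norm_v z_v by simp
    also have "\<dots> = W2 r * (W1 r)^2"
      using \<open>r > 0\<close> by (simp add: field_simps power2_eq_square)
    finally show ?thesis .
  qed
  finally show ?thesis
    unfolding r_def .
qed

text \<open>A conical peak is touched from above by quadratics with arbitrarily negative Hessian, so the
  superjet inequality fails whatever the value of \<open>c (norm z)\<close>; at the origin that value is junk.\<close>

lemma no_conical_peak:
  assumes "z \<in> \<Omega>" "\<epsilon> > 0" "\<delta> > 0"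
    and peak: "\<forall>x\<in>\<Omega>. norm (x - z) < \<delta> \<longrightarrow> u x - u z \<le> - \<epsilon> * norm (x - z) + C * (norm (x - z))^2"
  shows False
proof -
  obtain i :: 'n where True by simp
  define e :: "real^'n" where "e = axis i 1"
  define K where "K = 4 * (\<bar>c (norm z) * u z powr lam\<bar> + 1) / \<epsilon>^2"
  define v where "v = (\<epsilon>/2) *\<^sub>R e"
  define A where "A = radial_matrix (-K) 0 e"
  define C' where "C' = max C 0"
  have "norm e = 1" "K > 0"
    unfolding e_def K_def using \<open>\<epsilon> > 0\<close> by (auto simp: add_pos_nonneg)
  define d where "d = min \<delta> (\<epsilon> / (2 * C' + K + 1))"
  have "C' \<ge> 0" "d > 0"
    unfolding C'_def d_def using assms(2,3) \<open>K > 0\<close> by (auto simp: add_pos_nonneg)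
  have "u y - u z \<le> v \<bullet> (y - z) + 1/2 * ((A *v (y - z)) \<bullet> (y - z))"
    if "y \<in> \<Omega>" "norm (y - z) < d" for y
  proof -
    define n where "n = norm (y - z)"
    have "n \<ge> 0" "(2 * C' + K + 1) * n < \<epsilon>"
      using that \<open>C' \<ge> 0\<close> \<open>K > 0\<close> unfolding n_def d_def by (auto simp: pos_less_divide_eq mult.commute)
    then have "(C' + K/2) * n \<le> \<epsilon>/2"
      by (simp add: algebra_simps)
    then have "(C' + K/2) * n * n \<le> (\<epsilon>/2) * n"
      using \<open>n \<ge> 0\<close> by (rule mult_right_mono)
    moreover have "u y - u z \<le> - \<epsilon> * n + C' * n^2"
    proof -
      have "C * n^2 \<le> C' * n^2"
        unfolding C'_def by (intro mult_right_mono) auto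
      then show ?thesis
        using peak that unfolding n_def d_def by fastforce
    qed
    moreover have "- n \<le> e \<bullet> (y - z)"
      using Cauchy_Schwarz_ineq2[of e "y - z"] \<open>norm e = 1\<close> unfolding n_def by simp
    then have "- (\<epsilon>/2) * n \<le> v \<bullet> (y - z)"
      unfolding v_def using mult_left_mono[of "- n" _ "\<epsilon>/2"] \<open>\<epsilon> > 0\<close> by simp
    moreover have "1/2 * ((A *v (y - z)) \<bullet> (y - z)) = - (K/2) * n^2"
      unfolding A_def radial_matrix_quadratic_form n_def by simp
    ultimately show ?thesis
      by (simp add: algebra_simps power2_eq_square)
  qed
  moreover have "transpose A = A"
    unfolding A_def by (rule transpose_radial_matrix)
  ultimately have "(v, A) \<in> superjet2 \<Omega> u z"
    using \<open>d > 0\<close> by (intro superjet2_touching_above[OF superjet2_quadratic]) auto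
  then have "c (norm z) * u z powr lam \<le> (A *v v) \<bullet> v"
    using superjet2_bound \<open>z \<in> \<Omega>\<close> by blast
  also have "(A *v v) \<bullet> v = - (\<bar>c (norm z) * u z powr lam\<bar> + 1)"
    unfolding A_def v_def radial_matrix_quadratic_form K_def
    using \<open>norm e = 1\<close> \<open>\<epsilon> > 0\<close> by (simp add: power_mult_distrib field_simps)
  finally show False
    by linarith
qed

lemma cone_quadratic_touching_bound:
  fixes \<epsilon> \<delta> :: real
  defines "W \<equiv> \<lambda>r. - \<epsilon> * r + (4 * \<epsilon> / \<delta>) * r^2"
  assumes "z \<in> \<Omega>" "z \<noteq> 0" "norm z < \<delta>" "\<epsilon> > 0"
    and touch: "\<forall>x\<in>\<Omega>. norm x \<le> \<delta> \<longrightarrow> u x - u z \<le> W (norm x) - W (norm z)"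
  shows "c (norm z) * u z powr lam \<le> 648 * \<epsilon>^3 / \<delta>"
proof -
  define W1 where "W1 = (\<lambda>r. - \<epsilon> + (8 * \<epsilon> / \<delta>) * r)"
  have "\<delta> > 0"
    using assms(4) norm_ge_zero[of z] by linarith
  have "c (norm z) * u z powr lam \<le> (8 * \<epsilon> / \<delta>) * (W1 (norm z))^2"
  proof (rule radial_touching_above[OF \<open>z \<in> \<Omega>\<close>, of "norm z / 2" \<delta> W])
    show "\<forall>t\<in>{norm z / 2<..<\<delta>}. (W has_real_derivative W1 t) (at t)"
      unfolding W_def W1_def by (auto intro!: derivative_eq_intros)
    show "\<forall>x\<in>\<Omega>. norm (x - z) < \<delta> - norm z \<longrightarrow> u x - u z \<le> W (norm x) - W (norm z)"
      using touch norm_triangle_sub[of _ z] by (smt (verit, best))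
  qed (use assms(3,4) in \<open>auto intro!: derivative_eq_intros simp: W1_def\<close>)
  also have "\<dots> \<le> (8 * \<epsilon> / \<delta>) * (9 * \<epsilon>)^2"
  proof -
    have "\<bar>W1 (norm z)\<bar> \<le> 9 * \<epsilon>"
      unfolding W1_def using assms(4,5) \<open>\<delta> > 0\<close> by (simp add: field_simps abs_le_iff)
    then have "(W1 (norm z))^2 \<le> (9 * \<epsilon>)^2"
      by (metis abs_ge_zero power2_abs power_mono)
    then show ?thesis
      using assms(5) \<open>\<delta> > 0\<close> by (intro mult_left_mono) auto
  qed
  also have "\<dots> = 648 * \<epsilon>^3 / \<delta>"
    by (simp add: power2_eq_square power3_eq_cube)
  finally show ?thesis .
qed

text \<open>At the origin the equation only sees the junk value \<open>c 0\<close>, so the maximum is first moved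
  off the origin by the perturbation \<open>\<epsilon> * norm x - (4 * \<epsilon> / \<delta>') * (norm x)^2\<close>; if it stays at the
  origin it is a conical peak.\<close>

lemma no_positive_local_max_at_origin:
  assumes "0 \<in> \<Omega>" "u 0 > 0" "\<delta> > 0" and max: "\<forall>x\<in>\<Omega>. norm x < \<delta> \<longrightarrow> u x \<le> u 0"
  shows False
proof -
  obtain \<rho> where "\<rho> > 0" "ball 0 \<rho> \<subseteq> \<Omega>"
    using open_domain assms(1) open_contains_ball by blast
  define \<delta>' where "\<delta>' = min \<rho> \<delta> / 2"
  define S where "S = cball (0::real^'n) \<delta>'"
  have "\<delta>' > 0" "S \<subseteq> \<Omega>" "\<forall>x\<in>S. norm x < \<delta>"
    using \<open>\<rho> > 0\<close> \<open>ball 0 \<rho> \<subseteq> \<Omega>\<close> \<open>\<delta> > 0\<close> unfolding S_def \<delta>'_def by auto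
  define M where "M = u 0"
  define K where "K = c \<delta>' * (M/2) powr lam"
  have "M > 0" "K > 0"
    unfolding K_def M_def using c_pos \<open>\<delta>' > 0\<close> \<open>u 0 > 0\<close> by auto
  define \<epsilon> where "\<epsilon> = min 1 (min (M / (2*\<delta>')) (K * \<delta>' / 1296))"
  have "\<epsilon> \<le> M / (2*\<delta>')" "\<epsilon> \<le> K * \<delta>' / 1296"
    unfolding \<epsilon>_def by auto
  then have \<epsilon>: "\<epsilon> > 0" "\<epsilon> \<le> 1" "\<epsilon> * \<delta>' \<le> M / 2" "648 * \<epsilon> / \<delta>' \<le> K / 2"
    using \<open>M > 0\<close> \<open>K > 0\<close> \<open>\<delta>' > 0\<close> unfolding \<epsilon>_def by (auto simp: field_simps)
  define W where "W = (\<lambda>r. - \<epsilon> * r + (4 * \<epsilon> / \<delta>') * r^2)"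
  have "usc_on S (\<lambda>x. u x + - W (norm x))"
    using \<open>S \<subseteq> \<Omega>\<close> closure_subset unfolding W_def
    by (intro usc_on_add_continuous usc_on_subset[OF usc_u] continuous_intros) auto
  then obtain z where "z \<in> S" and z_max: "\<forall>x\<in>S. u x - W (norm x) \<le> u z - W (norm z)"
    using usc_on_compact_attains_max[of S] \<open>\<delta>' > 0\<close> unfolding S_def by fastforce
  have "0 \<in> S"
    unfolding S_def using \<open>\<delta>' > 0\<close> by simp
  then have "M \<le> u z - W (norm z)"
    using z_max unfolding W_def M_def by force
  moreover have "u z \<le> M" "norm z \<le> \<delta>'" "z \<in> \<Omega>"
    using max \<open>z \<in> S\<close> \<open>S \<subseteq> \<Omega>\<close> \<open>\<forall>x\<in>S. norm x < \<delta>\<close> unfolding M_def S_def by auto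
  moreover have "- W (norm z) \<le> \<epsilon> * \<delta>'"
  proof -
    have "0 \<le> 4 * \<epsilon> * (norm z)^2 / \<delta>'" "\<epsilon> * norm z \<le> \<epsilon> * \<delta>'"
      using \<epsilon>(1) \<open>\<delta>' > 0\<close> \<open>norm z \<le> \<delta>'\<close> by auto
    then show ?thesis
      unfolding W_def by simp
  qed
  ultimately have "M / 2 \<le> u z"
    using \<epsilon>(3) by linarith
  have "norm z < \<delta>'"
  proof (rule ccontr)
    assume "\<not> norm z < \<delta>'"
    then have "W (norm z) = 3 * \<epsilon> * \<delta>'"
      using \<open>norm z \<le> \<delta>'\<close> \<open>\<delta>' > 0\<close> unfolding W_def by (simp add: power2_eq_square)
    then show False
      using \<open>M \<le> u z - W (norm z)\<close> \<open>u z \<le> M\<close> mult_pos_pos[OF \<epsilon>(1) \<open>\<delta>' > 0\<close>] by linarith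
  qed
  have touch: "u x - u z \<le> W (norm x) - W (norm z)" if "x \<in> \<Omega>" "norm x \<le> \<delta>'" for x
    using z_max that unfolding S_def by force
  show False
  proof (cases "z = 0")
    case True
    then show False
      using no_conical_peak[of 0 \<epsilon> \<delta>' "4 * \<epsilon> / \<delta>'"] \<open>z \<in> \<Omega>\<close> \<epsilon>(1) \<open>\<delta>' > 0\<close> touch
      unfolding W_def by fastforce
  next
    case False
    then have "c (norm z) * u z powr lam \<le> 648 * \<epsilon>^3 / \<delta>'"
      using cone_quadratic_touching_bound[OF \<open>z \<in> \<Omega>\<close> _ \<open>norm z < \<delta>'\<close> \<epsilon>(1)] touch unfolding W_def by blast
    also have "\<dots> \<le> 648 * \<epsilon> / \<delta>'"
      using \<epsilon>(1,2) \<open>\<delta>' > 0\<close> power_le_one[of \<epsilon> 2] by (simp add: field_simps power3_eq_cube power2_eq_square)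
    also have "\<dots> < K"
      using \<epsilon>(4) \<open>K > 0\<close> by linarith
    also have "K \<le> c (norm z) * u z powr lam"
      unfolding K_def using c_le[of "norm z" \<delta>'] c_pos False \<open>norm z < \<delta>'\<close> \<open>M / 2 \<le> u z\<close> \<open>M > 0\<close>
        lam_gt_3 by (intro mult_mono powr_mono2) (auto simp: less_imp_le)
    finally show False
      by simp
  qed
qed

lemma no_positive_local_max:
  assumes "y \<in> \<Omega>" "u y > 0" "\<delta> > 0" and "\<forall>x\<in>\<Omega>. norm (x - y) < \<delta> \<longrightarrow> u x \<le> u y"
  shows False
proof (cases "y = 0")
  case False
  have "c (norm y) * u y powr lam \<le> 0 * 0^2"
    using assms False
    by (intro radial_touching_above[of y "norm y / 2" "2 * norm y" "\<lambda>_. 0" "\<lambda>_. 0" "\<lambda>_. 0" \<delta>]) auto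
  moreover have "c (norm y) > 0"
    using c_pos False by simp
  ultimately show False
    using \<open>u y > 0\<close> by (simp add: mult_le_0_iff)
qed (use no_positive_local_max_at_origin assms in auto)

lemma no_positive_max_inside_ball:
  assumes "y \<in> closure \<Omega>" "u y > 0" "norm y < R"
    and max: "\<forall>x\<in>closure \<Omega>. norm x \<le> R \<longrightarrow> u x \<le> u y"
  shows False
proof (rule no_positive_local_max[OF in_domain_if_pos[OF assms(1,2)] assms(2)])
  show "R - norm y > 0"
    using assms(3) by simp
  show "\<forall>x\<in>\<Omega>. norm (x - y) < R - norm y \<longrightarrow> u x \<le> u y"
    using max closure_subset norm_triangle_sub[of _ y] by (smt (verit, best) subsetD)
qed

end

section \<open>The maximum of u over balls\<close>

locale nontrivial_inf_solution = nonneg_inf_solution +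
  fixes x0 :: "real^'n"
  assumes x0: "x0 \<in> closure \<Omega>" "u x0 > 0"
begin

definition max_u :: "real \<Rightarrow> real" where
  "max_u r = Sup (u ` (closure \<Omega> \<inter> cball 0 r))"

lemma max_u_attained_on_sphere:
  assumes "norm x0 \<le> r"
  obtains y where "y \<in> closure \<Omega>" "norm y = r" "u y = max_u r"
    and "\<forall>x\<in>closure \<Omega>. norm x \<le> r \<longrightarrow> u x \<le> max_u r"
proof -
  define K where "K = closure \<Omega> \<inter> cball 0 r"
  have "compact K" "x0 \<in> K" "usc_on K u"
    unfolding K_def using x0 assms by (auto intro: usc_on_subset[OF usc_u] compact_Int_closed)
  then obtain y where "y \<in> K" and y_max: "\<forall>x\<in>K. u x \<le> u y"
    using usc_on_compact_attains_max[of K u] by blast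
  have "u y > 0"
    using y_max \<open>x0 \<in> K\<close> x0(2) by force
  then have "norm y = r"
    using \<open>y \<in> K\<close> y_max no_positive_max_inside_ball[of y r] unfolding K_def by force
  moreover have "max_u r = u y"
    unfolding max_u_def K_def[symmetric] using \<open>y \<in> K\<close> y_max by (intro cSup_eq_maximum) auto
  ultimately show ?thesis
    using that \<open>y \<in> K\<close> y_max unfolding K_def by auto
qed

lemma max_u_upper: "norm x0 \<le> r \<Longrightarrow> x \<in> closure \<Omega> \<Longrightarrow> norm x \<le> r \<Longrightarrow> u x \<le> max_u r"
  by (metis max_u_attained_on_sphere)

lemma max_u_pos: "norm x0 \<le> r \<Longrightarrow> max_u r > 0"
  using max_u_upper[of r x0] x0 by simp

lemma max_u_strict_mono:
  assumes "norm x0 \<le> r" "r < r'"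
  shows "max_u r < max_u r'"
proof -
  obtain y where y: "y \<in> closure \<Omega>" "norm y = r" "u y = max_u r"
    using max_u_attained_on_sphere[OF assms(1)] by blast
  have "max_u r \<le> max_u r'"
    using max_u_upper[of r' y] y assms by simp
  moreover have "max_u r \<noteq> max_u r'"
    using no_positive_max_inside_ball[of y r'] max_u_upper[of r'] y assms max_u_pos[of r] by force
  ultimately show ?thesis
    by simp
qed

lemma max_u_le_radial_supersolution:
  fixes W W1 W2 :: "real \<Rightarrow> real"
  assumes ab: "norm x0 \<le> a" "0 < a" "a < b"
    and cont: "continuous_on {a..b} W" and W_nonneg: "\<forall>r\<in>{a..b}. W r \<ge> 0"
    and W1: "\<forall>t\<in>{a<..<b}. (W has_real_derivative W1 t) (at t)"
    and W2: "\<forall>t\<in>{a<..<b}. (W1 has_real_derivative W2 t) (at t)"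
    and cont2: "continuous_on {a<..<b} W2"
    and super: "\<forall>r\<in>{a<..<b}. W2 r * (W1 r)^2 \<le> c r * W r powr lam"
    and boundary: "max_u a \<le> W a" "max_u b \<le> W b"
    and r: "a \<le> r" "r \<le> b"
  shows "max_u r \<le> W r"
proof (rule ccontr)
  assume "\<not> max_u r \<le> W r"
  define K where "K = closure \<Omega> \<inter> {x. a \<le> norm x \<and> norm x \<le> b}"
  have "compact K"
    unfolding K_def using compact_annulus by (intro closed_Int_compact) auto
  obtain y0 where y0: "y0 \<in> closure \<Omega>" "norm y0 = r" "u y0 = max_u r"
    using max_u_attained_on_sphere[of r] ab r by force
  have "continuous_on K (W \<circ> norm)"
    by (rule continuous_on_compose) (auto intro!: continuous_intros continuous_on_subset[OF cont] simp: K_def)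
  then have "continuous_on K (\<lambda>x. - W (norm x))"
    by (auto intro: continuous_intros simp: o_def)
  then have "usc_on K (\<lambda>x. u x + - W (norm x))"
    unfolding K_def by (intro usc_on_add_continuous usc_on_subset[OF usc_u]) auto
  moreover have "y0 \<in> K"
    unfolding K_def using y0 r by simp
  ultimately obtain z where "z \<in> K" and z_max: "\<forall>x\<in>K. u x - W (norm x) \<le> u z - W (norm z)"
    using usc_on_compact_attains_max[OF \<open>compact K\<close>] by fastforce
  then have "W (norm z) < u z"
    using \<open>y0 \<in> K\<close> y0 \<open>\<not> max_u r \<le> W r\<close> by force
  moreover have z: "z \<in> closure \<Omega>" "a \<le> norm z" "norm z \<le> b"
    using \<open>z \<in> K\<close> unfolding K_def by auto
  ultimately have "0 < u z"
    using W_nonneg by force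
  have "norm z \<noteq> a" "norm z \<noteq> b"
    using \<open>W (norm z) < u z\<close> z boundary max_u_upper[of a z] max_u_upper[of b z] ab by force+
  then have "a < norm z" "norm z < b"
    using z by auto
  have "z \<in> \<Omega>"
    using in_domain_if_pos z(1) \<open>0 < u z\<close> by blast
  have "c (norm z) * u z powr lam \<le> W2 (norm z) * (W1 (norm z))^2"
  proof (rule radial_touching_above[OF \<open>z \<in> \<Omega>\<close> ab(2) \<open>a < norm z\<close> \<open>norm z < b\<close> W1 W2 cont2])
    show "min (norm z - a) (b - norm z) > 0"
      using \<open>a < norm z\<close> \<open>norm z < b\<close> by simp
    have "x \<in> K" if "x \<in> \<Omega>" "norm (x - z) < min (norm z - a) (b - norm z)" for x
      using that closure_subset norm_triangle_sub[of x z] norm_triangle_sub[of z x]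
      unfolding K_def by (auto simp: norm_minus_commute)
    then show "\<forall>x\<in>\<Omega>. norm (x - z) < min (norm z - a) (b - norm z) \<longrightarrow> u x - u z \<le> W (norm x) - W (norm z)"
      using z_max by fastforce
  qed
  also have "\<dots> \<le> c (norm z) * W (norm z) powr lam"
    using super \<open>a < norm z\<close> \<open>norm z < b\<close> by simp
  also have "\<dots> < c (norm z) * u z powr lam"
    using c_pos ab(2) \<open>a < norm z\<close> W_nonneg z \<open>W (norm z) < u z\<close> lam_gt_3
    by (intro mult_strict_left_mono powr_less_mono2) (auto simp del: zero_less_norm_iff)
  finally show False
    by simp
qed

lemma radial_supersolution_initial_slope:
  fixes W W1 W2 :: "real \<Rightarrow> real"
  assumes ab: "norm x0 \<le> a" "0 < a" "a < b"
    and cont: "continuous_on {a..b} W" and W_nonneg: "\<forall>r\<in>{a..b}. W r \<ge> 0"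
    and W1: "\<forall>t\<in>{a<..<b}. (W has_real_derivative W1 t) (at t)"
    and W2: "\<forall>t\<in>{a<..<b}. (W1 has_real_derivative W2 t) (at t)"
    and cont2: "continuous_on {a<..<b} W2"
    and super: "\<forall>r\<in>{a<..<b}. W2 r * (W1 r)^2 \<le> c r * W r powr lam"
    and boundary: "W a = max_u a" "max_u b \<le> W b"
    and slope: "(W has_real_derivative w) (at a)"
    and above_line: "\<forall>r. a < r \<longrightarrow> max_u a + \<sigma> * (r - a) \<le> max_u r"
  shows "\<sigma> \<le> w"
proof (rule ccontr)
  assume "\<not> \<sigma> \<le> w"
  then have "w < \<sigma>"
    by simp
  then obtain r where r: "a < r" "r \<le> b" "W r < W a + \<sigma> * (r - a)"
    using has_real_derivative_imp_below_line[OF slope _ ab(3)] by blast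
  have "max_u r \<le> W r"
    using max_u_le_radial_supersolution[OF ab cont W_nonneg W1 W2 cont2 super _ boundary(2)] boundary(1) r
    by simp
  then show False
    using above_line r boundary(1) by force
qed

lemma max_u_below_chord:
  assumes "norm x0 \<le> a" "0 < a" "a < r" "r < b"
  shows "max_u r \<le> max_u a + (max_u b - max_u a) * (r - a) / (b - a)"
proof -
  define q where "q = (max_u b - max_u a) / (b - a)"
  have "q \<ge> 0"
    unfolding q_def using max_u_strict_mono[of a b] assms by simp
  have "max_u r \<le> max_u a + q * (r - a)"
  proof (rule max_u_le_radial_supersolution[of a b "\<lambda>t. max_u a + q * (t - a)" "\<lambda>t. q" "\<lambda>t. 0"])
    show "\<forall>t\<in>{a..b}. max_u a + q * (t - a) \<ge> 0"
      using max_u_pos[of a] \<open>q \<ge> 0\<close> assms by auto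
    show "\<forall>t\<in>{a<..<b}. ((\<lambda>t. max_u a + q * (t - a)) has_real_derivative q) (at t)"
      by (auto intro!: derivative_eq_intros)
    show "\<forall>t\<in>{a<..<b}. 0 * q^2 \<le> c t * (max_u a + q * (t - a)) powr lam"
      using c_pos assms by (auto intro!: mult_nonneg_nonneg simp: less_imp_le)
    show "max_u b \<le> max_u a + q * (b - a)"
      unfolding q_def using assms by simp
  qed (use assms in \<open>auto intro!: continuous_intros\<close>)
  then show ?thesis
    unfolding q_def by (simp add: field_simps)
qed

end

section \<open>Growth of the slopes on dyadic radii\<close>

locale dyadic_slopes = nontrivial_inf_solution \<Omega> c lam u x0
  for \<Omega> :: "(real^'n) set" and c lam u x0 +
  fixes R :: real
  assumes R: "R > 0" "norm x0 \<le> R"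
begin

definition \<rho> :: "nat \<Rightarrow> real" where "\<rho> j = R * 2^j"
definition m :: "nat \<Rightarrow> real" where "m j = max_u (\<rho> j)"
definition \<sigma> :: "nat \<Rightarrow> real" where "\<sigma> j = (m (Suc j) - m j) / \<rho> j"

lemma rho_pos: "\<rho> j > 0"
  unfolding \<rho>_def using R by simp

lemma rho_Suc: "\<rho> (Suc j) = 2 * \<rho> j"
  unfolding \<rho>_def by simp

lemma rho_mono: "i \<le> j \<Longrightarrow> \<rho> i \<le> \<rho> j"
  unfolding \<rho>_def using R by (simp add: power_increasing)

lemma norm_x0_le_rho: "norm x0 \<le> \<rho> j"
  using rho_mono[of 0 j] R(2) unfolding \<rho>_def by (simp del: mult_le_cancel_left1)

lemma m_pos: "m j > 0"
  unfolding m_def using max_u_pos[OF norm_x0_le_rho] .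

lemma sigma_pos: "\<sigma> j > 0"
  unfolding \<sigma>_def m_def using max_u_strict_mono[OF norm_x0_le_rho] rho_Suc rho_pos[of j] by simp

lemma m_Suc: "m (Suc j) = m j + \<sigma> j * \<rho> j"
  unfolding \<sigma>_def using rho_pos[of j] by simp

lemma max_u_above_line:
  assumes "\<rho> (Suc j) < r"
  shows "m (Suc j) + \<sigma> j * (r - \<rho> (Suc j)) \<le> max_u r"
proof -
  have "m (Suc j) \<le> m j + (max_u r - m j) * (\<rho> (Suc j) - \<rho> j) / (r - \<rho> j)"
    unfolding m_def using max_u_below_chord[OF norm_x0_le_rho rho_pos, of j "\<rho> (Suc j)" r] assms
      rho_Suc[of j] rho_pos[of j] by simp
  then have "\<sigma> j * \<rho> j * (r - \<rho> j) \<le> (max_u r - m j) * \<rho> j"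
    using m_Suc[of j] rho_Suc[of j] assms rho_pos[of j] by (simp add: field_simps)
  then have "\<sigma> j * (r - \<rho> j) \<le> max_u r - m j"
    using rho_pos[of j] by (simp add: mult.commute mult.left_commute)
  then show ?thesis
    using m_Suc[of j] rho_Suc[of j] by (simp add: algebra_simps)
qed

lemma sigma_le_Suc: "\<sigma> j \<le> \<sigma> (Suc j)"
proof -
  have "m (Suc j) + \<sigma> j * \<rho> (Suc j) \<le> m (Suc (Suc j))"
    using max_u_above_line[of j "\<rho> (Suc (Suc j))"] rho_Suc[of "Suc j"] rho_pos[of "Suc j"]
    unfolding m_def by simp
  then show ?thesis
    using m_Suc[of "Suc j"] rho_pos[of "Suc j"] by simp
qed

lemma sigma_mono: "i \<le> j \<Longrightarrow> \<sigma> i \<le> \<sigma> j"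
  by (induction j rule: dec_induct) (auto intro: order_trans sigma_le_Suc)

lemma m_Suc_le: "m (Suc j) \<le> m 0 + \<sigma> j * (\<rho> (Suc j) - \<rho> 0)"
proof (induction j)
  case (Suc j)
  have "m (Suc (Suc j)) \<le> m 0 + \<sigma> j * (\<rho> (Suc j) - \<rho> 0) + \<sigma> (Suc j) * \<rho> (Suc j)"
    using Suc m_Suc[of "Suc j"] by simp
  also have "\<dots> \<le> m 0 + \<sigma> (Suc j) * (\<rho> (Suc j) - \<rho> 0) + \<sigma> (Suc j) * \<rho> (Suc j)"
    using sigma_le_Suc[of j] rho_mono[of 0 "Suc j"] by (simp add: mult_right_mono)
  finally show ?case
    using rho_Suc[of "Suc j"] by (simp add: algebra_simps)
qed (use m_Suc[of 0] rho_Suc[of 0] in simp)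

lemma m_Suc_le_3: "m 0 \<le> \<sigma> j * \<rho> j \<Longrightarrow> m (Suc j) \<le> 3 * (\<sigma> j * \<rho> j)"
proof -
  have "\<sigma> j * (\<rho> (Suc j) - \<rho> 0) \<le> \<sigma> j * (2 * \<rho> j)"
    using sigma_pos[of j] rho_Suc[of j] rho_pos[of 0] by (intro mult_left_mono) auto
  then show "m 0 \<le> \<sigma> j * \<rho> j \<Longrightarrow> ?thesis"
    using m_Suc_le[of j] by simp
qed

definition \<theta> :: "nat \<Rightarrow> real" where
  "\<theta> j = min 1 (c (\<rho> (Suc (Suc j))) * \<rho> j powr (lam + 1) * \<sigma> j powr (lam - 3) / 9)"

lemma theta_pos: "\<theta> j > 0"
proof -
  have "c (\<rho> (Suc (Suc j))) > 0"
    using c_pos rho_pos by blast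
  then show ?thesis
    unfolding \<theta>_def using rho_pos[of j] sigma_pos[of j] by simp
qed

lemma theta_le_1: "\<theta> j \<le> 1"
  unfolding \<theta>_def by simp

lemma growth_barrier_supersolution:
  fixes j :: nat and s t :: real
  defines "a \<equiv> \<rho> (Suc j)" and "\<beta> \<equiv> \<theta> j * \<sigma> j / \<rho> (Suc j)"
  assumes s: "0 \<le> s" "s < \<sigma> j" and t: "a < t" "t < 2 * a"
  shows "2 * \<beta> * (s + 2 * \<beta> * (t - a))^2 \<le> c t * (m (Suc j) + s * (t - a) + \<beta> * (t - a)^2) powr lam"
proof -
  have "a > 0" "\<beta> > 0" "a = 2 * \<rho> j"
    unfolding a_def \<beta>_def using rho_pos theta_pos sigma_pos rho_Suc by auto
  have "2 * \<beta> * (t - a) \<le> 2 * \<theta> j * \<sigma> j"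
    using t \<open>\<beta> > 0\<close> \<open>a > 0\<close> mult_left_mono[of "t - a" a "2 * \<beta>"] unfolding \<beta>_def a_def by simp
  moreover have "\<theta> j * \<sigma> j \<le> \<sigma> j"
    using theta_le_1 sigma_pos[of j] by simp
  moreover have "0 \<le> 2 * \<beta> * (t - a)"
    using t \<open>\<beta> > 0\<close> by simp
  ultimately have "0 \<le> s + 2 * \<beta> * (t - a)" "s + 2 * \<beta> * (t - a) \<le> 3 * \<sigma> j"
    using s by linarith+
  then have "2 * \<beta> * (s + 2 * \<beta> * (t - a))^2 \<le> 2 * \<beta> * (3 * \<sigma> j)^2"
    using \<open>\<beta> > 0\<close> by (intro mult_left_mono power_mono) auto
  also have "\<dots> = 9 * \<theta> j * \<sigma> j^3 / \<rho> j"
    unfolding \<beta>_def \<open>a = 2 * \<rho> j\<close>[unfolded a_def] using rho_pos[of j]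
    by (simp add: field_simps power2_eq_square power3_eq_cube)
  also have "\<dots> \<le> c (\<rho> (Suc (Suc j))) * \<rho> j powr (lam + 1) * \<sigma> j powr (lam - 3) * \<sigma> j^3 / \<rho> j"
    using rho_pos[of j] sigma_pos[of j] unfolding \<theta>_def
    by (intro divide_right_mono mult_right_mono) auto
  also have "\<dots> = c (\<rho> (Suc (Suc j))) * (\<sigma> j * \<rho> j) powr lam"
  proof -
    have "\<sigma> j powr (lam - 3) * \<sigma> j^3 = \<sigma> j powr lam"
      using powr_diff_mult_power[OF sigma_pos[of j], where a = lam and n = 3] by simp
    moreover have "\<rho> j powr (lam + 1) = \<rho> j powr lam * \<rho> j"
      using rho_pos[of j] by (simp add: powr_add)
    ultimately show ?thesis
      using rho_pos[of j] sigma_pos[of j] by (simp add: powr_mult field_simps)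
  qed
  also have "\<dots> \<le> c t * (m (Suc j) + s * (t - a) + \<beta> * (t - a)^2) powr lam"
  proof (rule mult_mono)
    show "c (\<rho> (Suc (Suc j))) \<le> c t"
      using c_le t \<open>a > 0\<close> rho_Suc[of "Suc j"] unfolding a_def by simp
    have "0 \<le> s * (t - a)" "0 \<le> \<beta> * (t - a)^2"
      using s t \<open>\<beta> > 0\<close> by auto
    then have "\<sigma> j * \<rho> j \<le> m (Suc j) + s * (t - a) + \<beta> * (t - a)^2"
      using m_Suc[of j] m_pos[of j] by linarith
    then show "(\<sigma> j * \<rho> j) powr lam \<le> (m (Suc j) + s * (t - a) + \<beta> * (t - a)^2) powr lam"
      using sigma_pos[of j] rho_pos[of j] lam_gt_3 by (intro powr_mono2) auto
  qed (use c_pos t \<open>a > 0\<close> in \<open>auto intro!: less_imp_le\<close>)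
  finally show ?thesis .
qed

text \<open>Compare \<open>max_u\<close> on \<open>[\<rho> (j+1), \<rho> (j+2)]\<close> with the quadratic through its values at both ends
  whose initial slope is \<open>\<sigma> (j+1) - \<theta> j * \<sigma> j\<close>.\<close>

lemma sigma_growth: "\<sigma> j * (1 + \<theta> j) \<le> \<sigma> (Suc j)"
proof (rule ccontr)
  assume slow: "\<not> ?thesis"
  define a where "a = \<rho> (Suc j)"
  define s where "s = \<sigma> (Suc j) - \<theta> j * \<sigma> j"
  define \<beta> where "\<beta> = \<theta> j * \<sigma> j / a"
  define W where "W = (\<lambda>t. m (Suc j) + s * (t - a) + \<beta> * (t - a)^2)"
  have "a > 0" "\<beta> > 0" "\<rho> (Suc (Suc j)) = 2 * a"
    unfolding a_def \<beta>_def using rho_pos theta_pos sigma_pos rho_Suc by auto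
  have "s < \<sigma> j"
    using slow unfolding s_def by (simp add: algebra_simps)
  have "0 \<le> s"
    unfolding s_def using sigma_le_Suc[of j] theta_le_1[of j] sigma_pos[of j]
      mult_left_le_one_le[of "\<sigma> j" "\<theta> j"] theta_pos[of j] by linarith
  have W': "\<And>t. (W has_real_derivative s + 2 * \<beta> * (t - a)) (at t)"
    unfolding W_def by (auto intro!: derivative_eq_intros)
  have "\<sigma> j \<le> s + 2 * \<beta> * (a - a)"
  proof (rule radial_supersolution_initial_slope[of a "2 * a" W "\<lambda>t. s + 2 * \<beta> * (t - a)" "\<lambda>t. 2 * \<beta>"])
    show "\<forall>r\<in>{a<..<2 * a}. 2 * \<beta> * (s + 2 * \<beta> * (r - a))^2 \<le> c r * W r powr lam"
      using growth_barrier_supersolution[OF \<open>0 \<le> s\<close> \<open>s < \<sigma> j\<close>] unfolding W_def a_def \<beta>_def by simp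
    show "max_u (2 * a) \<le> W (2 * a)"
      using m_Suc[of "Suc j"] \<open>\<rho> (Suc (Suc j)) = 2 * a\<close> \<open>a > 0\<close>
      unfolding W_def \<beta>_def s_def m_def a_def by (simp add: power2_eq_square algebra_simps)
    show "\<forall>r. a < r \<longrightarrow> max_u a + \<sigma> j * (r - a) \<le> max_u r"
      using max_u_above_line[of j] unfolding a_def m_def by simp
    show "\<forall>r\<in>{a..2 * a}. 0 \<le> W r"
      unfolding W_def using m_pos[of "Suc j"] \<open>0 \<le> s\<close> \<open>\<beta> > 0\<close>
      by (auto intro!: add_nonneg_nonneg mult_nonneg_nonneg)
  qed (use W' norm_x0_le_rho \<open>a > 0\<close> \<open>0 \<le> s\<close> \<open>\<beta> > 0\<close> m_pos in
        \<open>auto intro!: derivative_eq_intros continuous_intros simp: W_def m_def a_def\<close>)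
  then show False
    using \<open>s < \<sigma> j\<close> by simp
qed

text \<open>The exponent \<open>\<alpha>\<close> makes \<open>A * (T - r) powr (- \<alpha>)\<close> an exact solution of
  \<open>W'' * W'^2 = C * W powr lam\<close>; \<open>\<kappa> * \<rho> j\<close> bounds the blow-up radius \<open>T\<close> used in \<open>no_blowup\<close>.\<close>

definition \<alpha> :: real where "\<alpha> = 4 / (lam - 3)"
definition \<kappa> :: real where "\<kappa> = 4 + 6 * \<alpha>"

lemma alpha_pos: "\<alpha> > 0"
  unfolding \<alpha>_def using lam_gt_3 by simp

lemma alpha_lam: "\<alpha> * (lam - 3) = 4"
  unfolding \<alpha>_def using lam_gt_3 by (simp add: field_simps)

lemma kappa_ge_4: "\<kappa> \<ge> 4"
  unfolding \<kappa>_def using alpha_pos by simp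

lemma blowup_barrier_coefficient:
  fixes j :: nat
  defines "D \<equiv> 2 * \<alpha> * m (Suc j) / \<sigma> j"
  assumes big: "m 0 \<le> \<sigma> j * \<rho> j"
    and c_large: "(\<alpha> + 1) / (16 * \<alpha>) \<le> c (\<kappa> * \<rho> j) * \<rho> j powr (lam + 1) * \<sigma> j powr (lam - 3)"
  shows "\<rho> (Suc j) + D \<le> \<kappa> * \<rho> j"
    and "\<alpha>^3 * (\<alpha> + 1) \<le> c (\<rho> (Suc j) + D) * (m (Suc j) * D powr \<alpha>) powr (lam - 3)"
proof -
  have "D \<le> 2 * \<alpha> * (3 * (\<sigma> j * \<rho> j)) / \<sigma> j"
    unfolding D_def using m_Suc_le_3[OF big] alpha_pos sigma_pos[of j]
    by (intro divide_right_mono mult_left_mono) auto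
  then show "\<rho> (Suc j) + D \<le> \<kappa> * \<rho> j"
    unfolding \<kappa>_def using rho_Suc[of j] rho_pos[of j] sigma_pos[of j] by (simp add: algebra_simps)
  moreover have "0 < \<rho> (Suc j) + D"
    unfolding D_def using rho_pos alpha_pos m_pos sigma_pos by (simp add: add_pos_pos)
  ultimately have "c (\<kappa> * \<rho> j) \<le> c (\<rho> (Suc j) + D)"
    using c_le by blast
  have "\<alpha>^3 * (\<alpha> + 1) = 16 * \<alpha>^4 * ((\<alpha> + 1) / (16 * \<alpha>))"
    using alpha_pos by (simp add: field_simps power_numeral_reduce)
  also have "\<dots> \<le> 16 * \<alpha>^4 * (c (\<kappa> * \<rho> j) * \<rho> j powr (lam + 1) * \<sigma> j powr (lam - 3))"
    using c_large by (intro mult_left_mono) auto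
  also have "\<dots> = c (\<kappa> * \<rho> j) * (16 * \<alpha>^4 * \<rho> j powr (lam + 1) * \<sigma> j powr (lam - 3))"
    by simp
  also have "\<dots> \<le> c (\<rho> (Suc j) + D) * (m (Suc j) * D powr \<alpha>) powr (lam - 3)"
  proof (rule mult_mono)
    show "16 * \<alpha>^4 * \<rho> j powr (lam + 1) * \<sigma> j powr (lam - 3) \<le> (m (Suc j) * D powr \<alpha>) powr (lam - 3)"
      unfolding D_def using m_Suc[of j] m_pos[of j]
      by (intro blowup_coefficient[OF alpha_pos alpha_lam lam_gt_3 sigma_pos rho_pos]) simp
    show "0 \<le> c (\<rho> (Suc j) + D)"
      using c_pos \<open>0 < \<rho> (Suc j) + D\<close> by (simp add: less_imp_le)
  qed (use \<open>c (\<kappa> * \<rho> j) \<le> c (\<rho> (Suc j) + D)\<close> in auto)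
  finally show "\<alpha>^3 * (\<alpha> + 1) \<le> c (\<rho> (Suc j) + D) * (m (Suc j) * D powr \<alpha>) powr (lam - 3)" .
qed

lemma blowup_barrier_supersolution:
  assumes "A > 0" "0 < r" "r < T" "\<alpha>^3 * (\<alpha> + 1) \<le> c T * A powr (lam - 3)"
  shows "(\<alpha> * (\<alpha> + 1) * A * (T - r) powr (- \<alpha> - 2)) * (\<alpha> * A * (T - r) powr (- \<alpha> - 1))^2
    \<le> c r * (A * (T - r) powr (- \<alpha>)) powr lam"
proof -
  have "(\<alpha> * (\<alpha> + 1) * A * (T - r) powr (- \<alpha> - 2)) * (\<alpha> * A * (T - r) powr (- \<alpha> - 1))^2
      = \<alpha>^3 * (\<alpha> + 1) / A powr (lam - 3) * (A * (T - r) powr (- \<alpha>)) powr lam"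
    using assms(1,3) by (intro blowup_barrier_equation alpha_lam) auto
  also have "\<dots> \<le> c T * (A * (T - r) powr (- \<alpha>)) powr lam"
  proof (rule mult_right_mono)
    show "\<alpha>^3 * (\<alpha> + 1) / A powr (lam - 3) \<le> c T"
      using assms(1,4) by (simp add: divide_le_eq)
  qed simp
  also have "\<dots> \<le> c r * (A * (T - r) powr (- \<alpha>)) powr lam"
    using c_le[of r T] assms(2,3) by (simp add: mult_right_mono)
  finally show ?thesis .
qed

text \<open>If the bound failed, the barrier \<open>A * (T - r) powr (- \<alpha>)\<close>, which equals \<open>max_u\<close> at \<open>\<rho> (j+1)\<close>
  and blows up at \<open>T\<close>, would be a supersolution starting with slope \<open>\<sigma> j / 2\<close>, contradicting
  \<open>radial_supersolution_initial_slope\<close>.\<close>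

lemma no_blowup:
  assumes big: "m 0 \<le> \<sigma> j * \<rho> j"
  shows "c (\<kappa> * \<rho> j) * \<rho> j powr (lam + 1) * \<sigma> j powr (lam - 3) < (\<alpha> + 1) / (16 * \<alpha>)"
proof (rule ccontr)
  assume c_large: "\<not> ?thesis"
  define a where "a = \<rho> (Suc j)"
  define D where "D = 2 * \<alpha> * m (Suc j) / \<sigma> j"
  define T where "T = a + D"
  define A where "A = m (Suc j) * D powr \<alpha>"
  define W where "W = (\<lambda>r. A * (T - r) powr (- \<alpha>))"
  define W1 where "W1 = (\<lambda>r. \<alpha> * A * (T - r) powr (- \<alpha> - 1))"
  define W2 where "W2 = (\<lambda>r. \<alpha> * (\<alpha> + 1) * A * (T - r) powr (- \<alpha> - 2))"
  have "a > 0" "D > 0"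
    unfolding a_def D_def using rho_pos alpha_pos m_pos sigma_pos by auto
  then have "A > 0"
    unfolding A_def using m_pos by simp
  have coefficient: "\<alpha>^3 * (\<alpha> + 1) \<le> c T * A powr (lam - 3)"
    using blowup_barrier_coefficient(2)[OF big] c_large unfolding T_def a_def D_def A_def by simp
  have "norm x0 \<le> T" "max_u T > 0"
    using norm_x0_le_rho[of "Suc j"] \<open>D > 0\<close> max_u_pos unfolding T_def a_def by auto
  then obtain \<eta> where "0 < \<eta>" "\<eta> < D" "max_u T \<le> A * \<eta> powr (- \<alpha>)"
    using exists_powr_neg_above[OF alpha_pos \<open>A > 0\<close> _ \<open>D > 0\<close>] by blast
  define b where "b = T - \<eta>"
  have "a < b" "b < T"
    unfolding b_def T_def using \<open>0 < \<eta>\<close> \<open>\<eta> < D\<close> by auto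
  have derivs: "(W has_real_derivative W1 r) (at r)" "(W1 has_real_derivative W2 r) (at r)" if "r < T" for r
    unfolding W_def W1_def W2_def using blowup_barrier_derivatives[OF that] by auto
  have "\<sigma> j \<le> W1 a"
  proof (rule radial_supersolution_initial_slope[of a b W W1 W2])
    show "\<forall>r\<in>{a<..<b}. W2 r * (W1 r)^2 \<le> c r * W r powr lam"
      unfolding W_def W1_def W2_def using \<open>A > 0\<close> \<open>a > 0\<close> \<open>b < T\<close> coefficient
      by (auto intro!: blowup_barrier_supersolution)
    show "W a = max_u a"
      using \<open>D > 0\<close> unfolding W_def A_def T_def a_def m_def
      by (simp add: powr_minus field_simps)
    show "max_u b \<le> W b"
      using max_u_strict_mono[of b T] norm_x0_le_rho[of "Suc j"] \<open>a < b\<close> \<open>b < T\<close>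
        \<open>max_u T \<le> A * \<eta> powr (- \<alpha>)\<close> unfolding W_def b_def a_def by simp
    show "\<forall>r. a < r \<longrightarrow> max_u a + \<sigma> j * (r - a) \<le> max_u r"
      using max_u_above_line[of j] unfolding a_def m_def by simp
    show "\<forall>r\<in>{a..b}. 0 \<le> W r"
      unfolding W_def using \<open>A > 0\<close> by simp
    show "continuous_on {a..b} W"
    proof (rule continuous_at_imp_continuous_on, intro ballI)
      fix r assume "r \<in> {a..b}"
      then show "isCont W r"
        using derivs(1)[THEN DERIV_isCont, of r] \<open>b < T\<close> by simp
    qed
    show "\<forall>t\<in>{a<..<b}. (W has_real_derivative W1 t) (at t)"
      "\<forall>t\<in>{a<..<b}. (W1 has_real_derivative W2 t) (at t)"
      using derivs \<open>b < T\<close> by auto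
    show "continuous_on {a<..<b} W2"
      unfolding W2_def using \<open>b < T\<close> by (intro continuous_intros) auto
    show "(W has_real_derivative W1 a) (at a)"
      using derivs(1) \<open>a < b\<close> \<open>b < T\<close> by simp
  qed (use \<open>a < b\<close> \<open>a > 0\<close> norm_x0_le_rho[of "Suc j"] in \<open>auto simp: a_def\<close>)
  moreover have "W1 a = \<sigma> j / 2"
    using \<open>D > 0\<close> sigma_pos[of j] alpha_pos m_pos[of "Suc j"]
    unfolding W1_def A_def T_def D_def
    by (simp add: powr_add[symmetric] powr_minus_divide field_simps)
  ultimately show False
    using sigma_pos[of j] by simp
qed

definition g :: "nat \<Rightarrow> real" where "g j = c (\<kappa> * \<rho> j) * \<rho> j powr (lam + 1)"

lemma g_nonneg: "g j \<ge> 0"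
proof -
  have "\<kappa> * \<rho> j > 0"
    using kappa_ge_4 rho_pos[of j] by simp
  then show ?thesis
    unfolding g_def using c_pos by (simp add: less_imp_le)
qed

lemma eventually_m0_le_sigma_rho: "\<exists>J. \<forall>j\<ge>J. m 0 \<le> \<sigma> j * \<rho> j"
proof -
  obtain J where "m 0 / (\<sigma> 0 * R) < 2^J"
    using real_arch_pow[of "2::real"] by auto
  then have "m 0 < \<sigma> 0 * \<rho> J"
    using sigma_pos[of 0] R by (simp add: \<rho>_def field_simps)
  moreover have "\<sigma> 0 * \<rho> J \<le> \<sigma> j * \<rho> j" if "J \<le> j" for j
    using sigma_mono[of 0 j] rho_mono[OF that] sigma_pos[of 0] rho_pos[of J] by (intro mult_mono) auto
  ultimately show ?thesis
    by (meson less_imp_le order_trans)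
qed

text \<open>With \<open>p = lam - 3\<close>, the growth of the slopes makes \<open>\<sigma> j powr (- p)\<close> decrease by a fixed multiple
  of \<open>g j\<close> at each step, so the series of \<open>g\<close> telescopes.\<close>

lemma summable_g: "summable g"
proof -
  obtain J where big: "\<And>j. J \<le> j \<Longrightarrow> m 0 \<le> \<sigma> j * \<rho> j"
    using eventually_m0_le_sigma_rho by blast
  define p where "p = lam - 3"
  define C where "C = (\<alpha> + 1) / (16 * \<alpha>)"
  define \<nu> where "\<nu> = p * 2 powr (- p - 1) / (9 + C)"
  define P where "P j = \<sigma> j powr (- p)" for j
  have "p > 0" "C > 0"
    unfolding p_def C_def using lam_gt_3 alpha_pos by auto
  then have "\<nu> > 0"
    unfolding \<nu>_def by simp
  have step: "\<nu> * g j \<le> P j - P (Suc j)" if "J \<le> j" for j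
  proof -
    have "c (\<kappa> * \<rho> j) \<le> c (\<rho> (Suc (Suc j)))"
      using c_le rho_pos kappa_ge_4 rho_Suc[of j] rho_Suc[of "Suc j"] rho_pos[of j] by simp
    then have "g j * \<sigma> j powr p \<le> c (\<rho> (Suc (Suc j))) * \<rho> j powr (lam + 1) * \<sigma> j powr (lam - 3)"
      unfolding g_def p_def by (intro mult_right_mono) auto
    then have "min 1 (g j * \<sigma> j powr p / 9) \<le> \<theta> j"
      unfolding \<theta>_def by (intro min.mono divide_right_mono) auto
    then have "\<sigma> j * (1 + min 1 (g j * \<sigma> j powr p / 9)) \<le> \<sigma> j * (1 + \<theta> j)"
      using sigma_pos[of j] by (intro mult_left_mono) auto
    then have "\<sigma> j * (1 + min 1 (g j * \<sigma> j powr p / 9)) \<le> \<sigma> (Suc j)"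
      using sigma_growth[of j] by linarith
    moreover have "g j * \<sigma> j powr p < C"
      using no_blowup[OF big[OF that]] unfolding g_def C_def p_def by (simp add: mult.assoc)
    ultimately show ?thesis
      using powr_neg_decrement[OF \<open>p > 0\<close> sigma_pos g_nonneg] unfolding \<nu>_def P_def
      by (simp add: field_simps)
  qed
  have "\<nu> * (\<Sum>i<n. g (i + J)) \<le> P J - P (n + J)" for n
  proof (induction n)
    case (Suc n)
    then show ?case
      using step[of "n + J"] by (simp add: algebra_simps)
  qed simp
  moreover have "P j \<ge> 0" for j
    unfolding P_def by simp
  ultimately have "\<nu> * (\<Sum>i<n. g (i + J)) \<le> P J" for n
    by (meson diff_le_eq le_add_same_cancel1 order_trans)
  then have "(\<Sum>i<n. g (i + J)) \<le> P J / \<nu>" for n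
    using \<open>\<nu> > 0\<close> by (simp add: pos_le_divide_eq mult.commute)
  then have "summable (\<lambda>i. g (i + J))"
    using g_nonneg by (intro summableI_nonneg_bounded) auto
  then show ?thesis
    by (simp add: summable_iff_shift)
qed

end

theorem corollary1:
  fixes \<Omega> :: "(real^'n) set" and c :: "real \<Rightarrow> real" and lam r0 :: real
    and u :: "real^'n \<Rightarrow> real"
  assumes "CARD('n) \<ge> 2"
    and "open \<Omega>" and "connected \<Omega>" and "\<not> bounded \<Omega>"
    and "r0 > 0"
    and "\<forall>r>r0. sphere 0 r \<inter> \<Omega> \<noteq> {}"
    and "\<forall>r>0. c r > 0"
    and "\<forall>r s. 0 < r \<and> r \<le> s \<longrightarrow> c s \<le> c r"
    and "lam > 3"
    and "(\<integral>\<^sup>+ r\<in>{r0..}. ennreal (r powr lam * c r) \<partial>lborel) = \<infinity>"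
    and "nonneg_solution \<Omega> c lam u"
  shows "\<forall>x\<in>closure \<Omega>. u x = 0"
proof (rule ccontr)
  assume "\<not> ?thesis"
  then obtain x0 where "x0 \<in> closure \<Omega>" "u x0 > 0"
    using assms(11) unfolding nonneg_solution_def by force
  define R where "R = max (norm x0) r0 + 1"
  interpret dyadic_slopes \<Omega> c lam u x0 R
    by unfold_locales (use assms \<open>x0 \<in> closure \<Omega>\<close> \<open>u x0 > 0\<close> in \<open>auto simp: R_def\<close>)
  have "c (\<kappa> * R * 2^j) * (\<kappa> * R * 2^j) powr (lam + 1) = \<kappa> powr (lam + 1) * g j" for j
    using kappa_ge_4 rho_pos[of j] unfolding g_def \<rho>_def by (simp add: powr_mult mult.assoc)
  then have "summable (\<lambda>j. c (\<kappa> * R * 2^j) * (\<kappa> * R * 2^j) powr (lam + 1))"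
    using summable_mult[OF summable_g] by presburger
  moreover have "r0 \<le> \<kappa> * R"
  proof -
    have "r0 \<le> R"
      unfolding R_def by simp
    also have "R \<le> \<kappa> * R"
      using kappa_ge_4 R(1) by simp
    finally show ?thesis .
  qed
  ultimately show False
    using nn_integral_finite_if_dyadic_summable[of r0 "\<kappa> * R" c lam] assms(5,7-10) by simp
qed

end
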